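(* Let $\lambda\in\mathbb{K}$. For each $n\ge1$ let $\mathcal{Q}^\lambda_n:=\mathbb{K}[x_1,\dots,x_n]$ with identity $1\in\mathbb{K}[x_1]$ and partial compositions $$(P\circ_iQ)(x_1,\dots,x_{n+m-1}):=P(x_1,\dots,x_{i-1},\theta^\lambda(x_i,\dots,x_{i+m-1}),x_{i+m},\dots,x_{n+m-1})\,Q(x_i,\dots,x_{i+m-1}).$$ Then $\mathcal{Q}^\lambda$ is a ns operad isomorphic to $\lambda\text{-}AsDer$, via $\mathrm{id}\mapsto 1\in\mathbb{K}[x_1]$, $D\mapsto x_1$, $\mu\mapsto 1\in\mathbb{K}[x_1,x_2]$; equivalently $\gamma(P;Q_1,\dots,Q_k)=P(\theta^\lambda(x_1,\dots,x_{i_1}),\theta^\lambda(x_{i_1+1},\dots,x_{i_1+i_2}),\dots)\,Q_1(x_1,\dots,x_{i_1})\,Q_2(x_{i_1+1},\dots,x_{i_1+i_2})\cdots$. Under this isomorphism the operation $(a_1,\dots,a_n)\mapsto D^{j_1}(a_1)\cdots D^{j_n}(a_n)$ corresponds to $x_1^{j_1}\cdots x_n^{j_n}$; in particular $\lambda\text{-}AsDer_n\cong\mathbb{K}[x_1,\dots,x_n]$.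
   Context: $\mathbb{K}$ is a commutative unital ring. A $\lambda$-derivation of an associative algebra $A$ is a linear map $D^A:A\to A$ with $D^A(ab)=D^A(a)b+aD^A(b)+\lambda D^A(a)D^A(b)$. $\lambda\text{-}AsDer$ is the ns operad governing associative algebras with a $\lambda$-derivation: generated by a unary $D$ and binary $\mu$ with relations $\mu\circ_1\mu=\mu\circ_2\mu$ and $D\circ_1\mu=\mu\circ_1D+\mu\circ_2D+\lambda(\mu\circ_1D)\circ_2D$. For variables $x_1,\dots,x_n$, $\theta^\lambda(x_1,\dots,x_n):=\sum_{k=1}^n\lambda^{k-1}\theta_k(x_1,\dots,x_n)$, where $\theta_k$ is the $k$th elementary symmetric function (so $\theta^\lambda=x_1+\cdots+x_n+\cdots+\lambda^{n-1}x_1\cdots x_n$). A ns operad is a family $(\mathcal{P}_n)_{n\ge1}$ with unit $\mathrm{id}\in\mathcal{P}_1$ and partial compositions $\circ_i:\mathcal{P}_m\otimes\mathcal{P}_n\to\mathcal{P}_{m+n-1}$ satisfying unitality, $(\lambda\circ_i\mu)\circ_{i-1+j}\nu=\lambda\circ_i(\mu\circ_j\nu)$ and $(\lambda\circ_i\mu)\circ_{k+m-1}\nu=(\lambda\circ_k\nu)\circ_i\mu$ for $i<k$. *)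

theory Defs
  imports Main "HOL-Library.Poly_Mapping"
begin

text \<open>P n is the n-th component (a K-submodule of the ambient type 'b, scalar action sc),
  e is the unit in P 1, and c n m i x y is the partial composition x \<circ>_i y
  for x in P n, y in P m, 1 \<le> i \<le> n (result in P (n+m-1)).\<close>

definition ns_operad ::
  "(nat \<Rightarrow> 'b::ab_group_add set) \<Rightarrow> ('a::comm_ring_1 \<Rightarrow> 'b \<Rightarrow> 'b) \<Rightarrow> 'b
     \<Rightarrow> (nat \<Rightarrow> nat \<Rightarrow> nat \<Rightarrow> 'b \<Rightarrow> 'b \<Rightarrow> 'b) \<Rightarrow> bool" where
  "ns_operad P sc e c \<longleftrightarrow>
     \<comment> \<open>each component is a K-module\<close>
     (\<forall>n\<ge>1. 0 \<in> P n \<and> (\<forall>x\<in>P n. \<forall>y\<in>P n. x + y \<in> P n) \<and> (\<forall>a. \<forall>x\<in>P n. sc a x \<in> P n)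
        \<and> (\<forall>a. \<forall>x\<in>P n. \<forall>y\<in>P n. sc a (x + y) = sc a x + sc a y)
        \<and> (\<forall>a b. \<forall>x\<in>P n. sc (a + b) x = sc a x + sc b x)
        \<and> (\<forall>a b. \<forall>x\<in>P n. sc (a * b) x = sc a (sc b x))
        \<and> (\<forall>x\<in>P n. sc 1 x = x)) \<and>
     e \<in> P 1 \<and>
     \<comment> \<open>partial compositions are well-typed and bilinear\<close>
     (\<forall>n m i x y. 1 \<le> m \<longrightarrow> 1 \<le> i \<longrightarrow> i \<le> n \<longrightarrow> x \<in> P n \<longrightarrow> y \<in> P m \<longrightarrow>
        c n m i x y \<in> P (n + m - 1)) \<and>
     (\<forall>n m i x x' y. 1 \<le> m \<longrightarrow> 1 \<le> i \<longrightarrow> i \<le> n \<longrightarrow> x \<in> P n \<longrightarrow> x' \<in> P n \<longrightarrow> y \<in> P m \<longrightarrow>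
        c n m i (x + x') y = c n m i x y + c n m i x' y) \<and>
     (\<forall>n m i x y y'. 1 \<le> m \<longrightarrow> 1 \<le> i \<longrightarrow> i \<le> n \<longrightarrow> x \<in> P n \<longrightarrow> y \<in> P m \<longrightarrow> y' \<in> P m \<longrightarrow>
        c n m i x (y + y') = c n m i x y + c n m i x y') \<and>
     (\<forall>n m i a x y. 1 \<le> m \<longrightarrow> 1 \<le> i \<longrightarrow> i \<le> n \<longrightarrow> x \<in> P n \<longrightarrow> y \<in> P m \<longrightarrow>
        c n m i (sc a x) y = sc a (c n m i x y) \<and> c n m i x (sc a y) = sc a (c n m i x y)) \<and>
     \<comment> \<open>unitality\<close>
     (\<forall>n\<ge>1. \<forall>x\<in>P n. c 1 n 1 e x = x \<and> (\<forall>i. 1 \<le> i \<longrightarrow> i \<le> n \<longrightarrow> c n 1 i x e = x)) \<and>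
     \<comment> \<open>sequential associativity\<close>
     (\<forall>l m k i j x y z. 1 \<le> i \<longrightarrow> i \<le> l \<longrightarrow> 1 \<le> j \<longrightarrow> j \<le> m \<longrightarrow> 1 \<le> k \<longrightarrow>
        x \<in> P l \<longrightarrow> y \<in> P m \<longrightarrow> z \<in> P k \<longrightarrow>
        c (l + m - 1) k (i - 1 + j) (c l m i x y) z = c l (m + k - 1) i x (c m k j y z)) \<and>
     \<comment> \<open>parallel associativity\<close>
     (\<forall>l m k i j x y z. 1 \<le> i \<longrightarrow> i < j \<longrightarrow> j \<le> l \<longrightarrow> 1 \<le> m \<longrightarrow> 1 \<le> k \<longrightarrow>
        x \<in> P l \<longrightarrow> y \<in> P m \<longrightarrow> z \<in> P k \<longrightarrow>
        c (l + m - 1) k (j + m - 1) (c l m i x y) z = c (l + k - 1) m i (c l k j x z) y)"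

text \<open>A polynomial is a finitely supported map from monomials (finitely supported exponent
  vectors, variable x_k has index k) to coefficients.\<close>

type_synonym 'a kpoly = "(nat \<Rightarrow>\<^sub>0 nat) \<Rightarrow>\<^sub>0 'a"

definition Xv :: "nat \<Rightarrow> 'a::comm_ring_1 kpoly" where
  "Xv k = Poly_Mapping.single (Poly_Mapping.single k 1) 1"

definition pconst :: "'a::comm_ring_1 \<Rightarrow> 'a kpoly" where
  "pconst c = Poly_Mapping.single 0 c"

definition qsc :: "'a::comm_ring_1 \<Rightarrow> 'a kpoly \<Rightarrow> 'a kpoly" where
  "qsc c p = pconst c * p"

definition psubst :: "(nat \<Rightarrow> 'a::comm_ring_1 kpoly) \<Rightarrow> 'a kpoly \<Rightarrow> 'a kpoly" where
  "psubst \<sigma> p = (\<Sum>mon\<in>Poly_Mapping.keys p.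
      pconst (Poly_Mapping.lookup p mon) * (\<Prod>v\<in>Poly_Mapping.keys mon. \<sigma> v ^ Poly_Mapping.lookup (mon :: nat \<Rightarrow>\<^sub>0 nat) v))"

definition Qc :: "nat \<Rightarrow> 'a::comm_ring_1 kpoly set" where
  "Qc n = {p. \<forall>m\<in>Poly_Mapping.keys p. Poly_Mapping.keys m \<subseteq> {1..n}}"

definition esym :: "nat set \<Rightarrow> nat \<Rightarrow> 'a::comm_ring_1 kpoly" where
  "esym A k = (\<Sum>S\<in>{S. S \<subseteq> A \<and> card S = k}. \<Prod>j\<in>S. Xv j)"

definition theta :: "'a::comm_ring_1 \<Rightarrow> nat \<Rightarrow> nat \<Rightarrow> 'a kpoly" where
  "theta lam i m = (\<Sum>k=1..m. pconst (lam ^ (k - 1)) * esym {i..<i + m} k)"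

definition qcomp :: "'a::comm_ring_1 \<Rightarrow> nat \<Rightarrow> nat \<Rightarrow> nat \<Rightarrow> 'a kpoly \<Rightarrow> 'a kpoly \<Rightarrow> 'a kpoly" where
  "qcomp lam n m i P Q =
     psubst (\<lambda>j. if j < i then Xv j else if j = i then theta lam i m else Xv (j + m - 1)) P
     * psubst (\<lambda>j. Xv (j + i - 1)) Q"

text \<open>Planar rooted trees with vertices labelled by D or mu; Leaf is the trivial tree (id).\<close>
datatype optree = Leaf | Dn optree | Mu optree optree

fun leaves :: "optree \<Rightarrow> nat" where
  "leaves Leaf = 1"
| "leaves (Dn t) = leaves t"
| "leaves (Mu t u) = leaves t + leaves u"

text \<open>Grafting s onto the i-th leaf (counted from the left, from 1) of t.\<close>
fun graft :: "nat \<Rightarrow> optree \<Rightarrow> optree \<Rightarrow> optree" where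
  "graft i Leaf s = (if i = 1 then s else Leaf)"
| "graft i (Dn t) s = Dn (graft i t s)"
| "graft i (Mu t u) s =
     (if i \<le> leaves t then Mu (graft i t s) u else Mu t (graft (i - leaves t) u s))"

text \<open>The free ns operad: arity-n part = free K-module on trees with n leaves.\<close>
definition Fc :: "nat \<Rightarrow> (optree \<Rightarrow>\<^sub>0 'a::comm_ring_1) set" where
  "Fc n = {f. \<forall>t\<in>Poly_Mapping.keys f. leaves t = n}"

definition ft :: "optree \<Rightarrow> (optree \<Rightarrow>\<^sub>0 'a::comm_ring_1)" where
  "ft t = Poly_Mapping.single t 1"

definition fsc :: "'a::comm_ring_1 \<Rightarrow> (optree \<Rightarrow>\<^sub>0 'a) \<Rightarrow> (optree \<Rightarrow>\<^sub>0 'a)" where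
  "fsc a f = (\<Sum>t\<in>Poly_Mapping.keys f. Poly_Mapping.single t (a * Poly_Mapping.lookup f t))"

definition fcomp :: "nat \<Rightarrow> (optree \<Rightarrow>\<^sub>0 'a::comm_ring_1) \<Rightarrow> (optree \<Rightarrow>\<^sub>0 'a) \<Rightarrow> (optree \<Rightarrow>\<^sub>0 'a)" where
  "fcomp i f g = (\<Sum>t\<in>Poly_Mapping.keys f. \<Sum>s\<in>Poly_Mapping.keys g.
       Poly_Mapping.single (graft i t s) (Poly_Mapping.lookup f t * Poly_Mapping.lookup g s))"

text \<open>Relations: mu \<circ>_1 mu - mu \<circ>_2 mu, and
  D \<circ>_1 mu - mu \<circ>_1 D - mu \<circ>_2 D - lambda (mu \<circ>_1 D) \<circ>_2 D.\<close>
definition rel_assoc :: "optree \<Rightarrow>\<^sub>0 'a::comm_ring_1" where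
  "rel_assoc = ft (Mu (Mu Leaf Leaf) Leaf) - ft (Mu Leaf (Mu Leaf Leaf))"

definition rel_der :: "'a::comm_ring_1 \<Rightarrow> optree \<Rightarrow>\<^sub>0 'a" where
  "rel_der lam = ft (Dn (Mu Leaf Leaf)) - ft (Mu (Dn Leaf) Leaf) - ft (Mu Leaf (Dn Leaf))
                 - fsc lam (ft (Mu (Dn Leaf) (Dn Leaf)))"

text \<open>The operadic ideal generated by the relations (pairs (arity, element)).\<close>
inductive_set asder_ideal :: "'a::comm_ring_1 \<Rightarrow> (nat \<times> (optree \<Rightarrow>\<^sub>0 'a)) set"
  for lam :: 'a where
  gen_assoc: "(3, rel_assoc) \<in> asder_ideal lam"
| gen_der: "(2, rel_der lam) \<in> asder_ideal lam"
| zero: "n \<ge> 1 \<Longrightarrow> (n, 0) \<in> asder_ideal lam"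
| add: "(n, f) \<in> asder_ideal lam \<Longrightarrow> (n, g) \<in> asder_ideal lam \<Longrightarrow> (n, f + g) \<in> asder_ideal lam"
| smul: "(n, f) \<in> asder_ideal lam \<Longrightarrow> (n, fsc a f) \<in> asder_ideal lam"
| comp_left: "(l, f) \<in> asder_ideal lam \<Longrightarrow> g \<in> Fc m \<Longrightarrow> 1 \<le> m \<Longrightarrow> 1 \<le> i \<Longrightarrow> i \<le> l \<Longrightarrow>
     (l + m - 1, fcomp i f g) \<in> asder_ideal lam"
| comp_right: "f \<in> Fc l \<Longrightarrow> (m, g) \<in> asder_ideal lam \<Longrightarrow> 1 \<le> i \<Longrightarrow> i \<le> l \<Longrightarrow>
     (l + m - 1, fcomp i f g) \<in> asder_ideal lam"

text \<open>The tree of the operation (a_1..a_n) \<mapsto> D^{j_1}(a_1) ... D^{j_n}(a_n).\<close>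
fun mprod :: "optree list \<Rightarrow> optree" where
  "mprod [] = Leaf"
| "mprod [t] = t"
| "mprod (t # ts) = Mu t (mprod ts)"

definition dmono_tree :: "nat list \<Rightarrow> optree" where
  "dmono_tree js = mprod (map (\<lambda>j. (Dn ^^ j) Leaf) js)"

end

theory Submission
  imports Defs
begin

text \<open>
  The partial composition \<open>P \<circ>\<^sub>i Q\<close> is the product of two
  substitution images: \<open>P\<close> under \<open>ins_sub\<close> (which puts \<open>\<theta>\<^sup>\<lambda>(x\<^sub>i..x\<^sub>i\<^sub>+\<^sub>m\<^sub>-\<^sub>1)\<close> in slot \<open>i\<close> and
  shifts the later variables) and \<open>Q\<close> under \<open>place i\<close> (which moves \<open>x\<^sub>1..x\<^sub>m\<close> to \<open>x\<^sub>i..x\<^sub>i\<^sub>+\<^sub>m\<^sub>-\<^sub>1\<close>).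
  Substitution is a ring homomorphism and substitutions compose, so every operad axiom
  reduces to an identity between substitutions on single variables.  The only
  non-trivial ones are that \<open>\<theta>\<close> is stable under shifts and that substituting a block
  \<open>\<theta>\<close> into a block \<open>\<theta>\<close> gives the \<open>\<theta>\<close> of the merged block; both follow from the
  composition law \<open>\<theta>\<^sub>A\<^sub>\<union>\<^sub>B = \<theta>\<^sub>A + \<theta>\<^sub>B + \<lambda>\<theta>\<^sub>A\<theta>\<^sub>B\<close> (A, B disjoint), itself a consequence of
  Pascal's rule for elementary symmetric functions.

  A tree is sent to a polynomial recursively (\<open>id \<mapsto> 1\<close>,
  \<open>D t \<mapsto> \<theta>(x\<^sub>1..x\<^sub>n)\<cdot>\<phi>(t)\<close>, \<open>\<mu>(t,u) \<mapsto> \<phi>(t)\<cdot>\<phi>(u)\<close> with the variables of \<open>u\<close> shifted), and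
  linearly extended to \<open>\<Phi>\<close>.  By induction on trees \<open>\<Phi>\<close> turns grafting into \<open>\<circ>\<^sub>i\<close>; the
  two relations map to 0, hence the operadic ideal lies in the kernel.  Conversely,
  associativity and the Leibniz rule rewrite every tree, modulo the ideal, into a
  combination of the normal trees \<open>D\<^sup>j\<^sup>1(\<dash>)\<cdots>D\<^sup>j\<^sup>n(\<dash>)\<close>, which \<open>\<Phi>\<close> sends to the distinct
  monomials \<open>x\<^sub>1\<^sup>j\<^sup>1\<cdots>x\<^sub>n\<^sup>j\<^sup>n\<close>.  This yields both kernel \<open>\<subseteq>\<close> ideal and surjectivity.
\<close>

section \<open>Polynomials and substitution\<close>

lemma pconst_0 [simp]: "pconst 0 = 0" by (simp add: pconst_def)
lemma pconst_1 [simp]: "pconst 1 = 1" by (simp add: pconst_def)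
lemma pconst_add: "pconst (a + b) = pconst a + pconst b" by (simp add: pconst_def single_add)
lemma pconst_mult: "pconst (a * b) = pconst a * pconst b" by (simp add: pconst_def mult_single)

lemma sum_single_keys: "(\<Sum>a\<in>Poly_Mapping.keys p. Poly_Mapping.single a (Poly_Mapping.lookup p a)) = p"
proof (rule poly_mapping_eqI)
  fix k
  show "Poly_Mapping.lookup (\<Sum>a\<in>Poly_Mapping.keys p. Poly_Mapping.single a (Poly_Mapping.lookup p a)) k
      = Poly_Mapping.lookup p k"
    by (cases "k \<in> Poly_Mapping.keys p")
       (auto simp: lookup_sum lookup_single when_def in_keys_iff sum.delta)
qed

definition mon_eval :: "(nat \<Rightarrow> 'a::comm_ring_1 kpoly) \<Rightarrow> (nat \<Rightarrow>\<^sub>0 nat) \<Rightarrow> 'a kpoly" where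
  "mon_eval \<sigma> mon = (\<Prod>v\<in>Poly_Mapping.keys mon. \<sigma> v ^ Poly_Mapping.lookup mon v)"

lemma psubst_mon_eval:
  "psubst \<sigma> p = (\<Sum>mon\<in>Poly_Mapping.keys p. pconst (Poly_Mapping.lookup p mon) * mon_eval \<sigma> mon)"
  by (simp add: psubst_def mon_eval_def)

lemma psubst_superset:
  assumes "finite S" "Poly_Mapping.keys p \<subseteq> S"
  shows "psubst \<sigma> p = (\<Sum>mon\<in>S. pconst (Poly_Mapping.lookup p mon) * mon_eval \<sigma> mon)"
  unfolding psubst_mon_eval using assms by (intro sum.mono_neutral_left) (auto simp: in_keys_iff)

lemma mon_eval_superset:
  assumes "finite S" "Poly_Mapping.keys mon \<subseteq> S"
  shows "mon_eval \<sigma> mon = (\<Prod>v\<in>S. \<sigma> v ^ Poly_Mapping.lookup mon v)"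
  unfolding mon_eval_def using assms by (intro prod.mono_neutral_left) (auto simp: in_keys_iff)

lemma mon_eval_add: "mon_eval \<sigma> (a + b) = mon_eval \<sigma> a * mon_eval \<sigma> b"
proof -
  let ?S = "Poly_Mapping.keys a \<union> Poly_Mapping.keys b"
  have "mon_eval \<sigma> (a + b) = (\<Prod>v\<in>?S. \<sigma> v ^ Poly_Mapping.lookup (a + b) v)"
    using keys_add[of a b] by (intro mon_eval_superset) auto
  also have "\<dots> = (\<Prod>v\<in>?S. \<sigma> v ^ Poly_Mapping.lookup a v) * (\<Prod>v\<in>?S. \<sigma> v ^ Poly_Mapping.lookup b v)"
    by (simp add: lookup_add power_add prod.distrib)
  also have "\<dots> = mon_eval \<sigma> a * mon_eval \<sigma> b"
    by (subst (1 2) mon_eval_superset[of ?S]) auto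
  finally show ?thesis .
qed

lemma psubst_0 [simp]: "psubst \<sigma> 0 = 0" by (simp add: psubst_def)

lemma psubst_add: "psubst \<sigma> (p + q) = psubst \<sigma> p + psubst \<sigma> q"
proof -
  let ?S = "Poly_Mapping.keys p \<union> Poly_Mapping.keys q"
  have "psubst \<sigma> (p + q) = (\<Sum>mon\<in>?S. pconst (Poly_Mapping.lookup (p + q) mon) * mon_eval \<sigma> mon)"
    using keys_add[of p q] by (intro psubst_superset) auto
  also have "\<dots> = (\<Sum>mon\<in>?S. pconst (Poly_Mapping.lookup p mon) * mon_eval \<sigma> mon)
                + (\<Sum>mon\<in>?S. pconst (Poly_Mapping.lookup q mon) * mon_eval \<sigma> mon)"
    by (simp add: lookup_add pconst_add distrib_right sum.distrib)
  also have "\<dots> = psubst \<sigma> p + psubst \<sigma> q"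
    by (subst (1 2) psubst_superset[of ?S]) auto
  finally show ?thesis .
qed

lemma psubst_single: "psubst \<sigma> (Poly_Mapping.single mon c) = pconst c * mon_eval \<sigma> mon"
  by (subst psubst_superset[of "{mon}"]) auto

lemma psubst_sum: "psubst \<sigma> (sum f A) = (\<Sum>a\<in>A. psubst \<sigma> (f a))"
  by (induction A rule: infinite_finite_induct) (auto simp: psubst_add)

lemma psubst_mult: "psubst \<sigma> (p * q) = psubst \<sigma> p * psubst \<sigma> q"
proof -
  have "p * q = (\<Sum>a\<in>Poly_Mapping.keys p. Poly_Mapping.single a (Poly_Mapping.lookup p a)) *
     (\<Sum>b\<in>Poly_Mapping.keys q. Poly_Mapping.single b (Poly_Mapping.lookup q b))"
    by (simp add: sum_single_keys)
  also have "\<dots> = (\<Sum>a\<in>Poly_Mapping.keys p. \<Sum>b\<in>Poly_Mapping.keys q.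
        Poly_Mapping.single (a + b) (Poly_Mapping.lookup p a * Poly_Mapping.lookup q b))"
    by (simp add: sum_distrib_left sum_distrib_right mult_single) (rule sum.swap)
  finally have "psubst \<sigma> (p * q) = (\<Sum>a\<in>Poly_Mapping.keys p. \<Sum>b\<in>Poly_Mapping.keys q.
        pconst (Poly_Mapping.lookup p a) * mon_eval \<sigma> a * (pconst (Poly_Mapping.lookup q b) * mon_eval \<sigma> b))"
    by (simp add: psubst_sum psubst_single mon_eval_add pconst_mult mult_ac)
  also have "\<dots> = psubst \<sigma> p * psubst \<sigma> q"
    by (simp add: psubst_mon_eval sum_distrib_left sum_distrib_right) (rule sum.swap)
  finally show ?thesis .
qed

lemma psubst_pconst [simp]: "psubst \<sigma> (pconst c) = pconst c"
  by (simp add: pconst_def psubst_single mon_eval_def)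

lemma psubst_1 [simp]: "psubst \<sigma> 1 = 1"
  using psubst_pconst[of \<sigma> 1] by simp

lemma psubst_Xv [simp]: "psubst \<sigma> (Xv k) = \<sigma> k"
  by (simp add: Xv_def psubst_single mon_eval_def)

lemma psubst_power: "psubst \<sigma> (p ^ n) = psubst \<sigma> p ^ n"
  by (induction n) (auto simp: psubst_mult)

lemma psubst_prod: "psubst \<sigma> (prod f A) = (\<Prod>a\<in>A. psubst \<sigma> (f a))"
  by (induction A rule: infinite_finite_induct) (auto simp: psubst_mult)

lemma psubst_comp: "psubst \<sigma> (psubst \<tau> p) = psubst (\<lambda>v. psubst \<sigma> (\<tau> v)) p"
proof -
  have "psubst \<sigma> (psubst \<tau> p) = (\<Sum>mon\<in>Poly_Mapping.keys p. pconst (Poly_Mapping.lookup p mon) *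
      (\<Prod>v\<in>Poly_Mapping.keys mon. psubst \<sigma> (\<tau> v) ^ Poly_Mapping.lookup mon v))"
    by (simp only: psubst_mon_eval[of \<tau>] mon_eval_def psubst_sum psubst_mult psubst_pconst
        psubst_prod psubst_power)
  then show ?thesis by (simp only: psubst_mon_eval[of "\<lambda>v. psubst \<sigma> (\<tau> v)"] mon_eval_def)
qed

lemma Xv_power: "Xv v ^ e = Poly_Mapping.single (Poly_Mapping.single v e) 1"
  by (induction e) (auto simp: Xv_def mult_single single_add[symmetric] add.commute)

lemma prod_singles:
  "(\<Prod>v\<in>A. Poly_Mapping.single (f v) (1::'a::comm_ring_1)) = Poly_Mapping.single (\<Sum>v\<in>A. f v) 1"
  by (induction A rule: infinite_finite_induct) (auto simp: mult_single)

lemma psubst_Xv_id [simp]: "psubst Xv p = p"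
proof -
  have mon: "mon_eval Xv mon = Poly_Mapping.single mon 1" for mon :: "nat \<Rightarrow>\<^sub>0 nat"
    by (simp add: mon_eval_def Xv_power prod_singles sum_single_keys)
  have "psubst Xv p = (\<Sum>mon\<in>Poly_Mapping.keys p. Poly_Mapping.single mon (Poly_Mapping.lookup p mon))"
    by (simp add: psubst_mon_eval mon pconst_def mult_single)
  then show ?thesis by (simp add: sum_single_keys)
qed

section \<open>Variables and the components \<open>K[x\<^sub>1,\<dots>,x\<^sub>n]\<close>\<close>

definition vars :: "'a::comm_ring_1 kpoly \<Rightarrow> nat set" where
  "vars p = (\<Union>m\<in>Poly_Mapping.keys p. Poly_Mapping.keys m)"

lemma psubst_cong: "(\<And>v. v \<in> vars p \<Longrightarrow> \<sigma> v = \<sigma>' v) \<Longrightarrow> psubst \<sigma> p = psubst \<sigma>' p"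
  unfolding psubst_def vars_def
  by (intro sum.cong refl arg_cong2[where f="(*)"] prod.cong) (metis UN_I)

lemma Qc_iff: "p \<in> Qc n \<longleftrightarrow> vars p \<subseteq> {1..n}"
  by (auto simp: Qc_def vars_def)

lemma vars_0 [simp]: "vars 0 = {}" by (simp add: vars_def)
lemma vars_1 [simp]: "vars 1 = {}" by (simp add: vars_def)
lemma vars_pconst [simp]: "vars (pconst c) = {}" by (simp add: vars_def pconst_def)
lemma vars_Xv: "vars (Xv k) \<subseteq> {k}" by (simp add: vars_def Xv_def)

lemma vars_add: "vars (p + q) \<subseteq> vars p \<union> vars q"
  using keys_add[of p q] by (auto simp: vars_def)

lemma vars_mult: "vars (p * q) \<subseteq> vars p \<union> vars q"
proof
  fix v assume "v \<in> vars (p * q)"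
  then obtain m where m: "m \<in> Poly_Mapping.keys (p * q)" "v \<in> Poly_Mapping.keys m"
    by (auto simp: vars_def)
  then obtain a b where ab: "m = a + b" "a \<in> Poly_Mapping.keys p" "b \<in> Poly_Mapping.keys q"
    using keys_mult[of p q] by blast
  then have "v \<in> Poly_Mapping.keys a \<union> Poly_Mapping.keys b" using m keys_add[of a b] by auto
  then show "v \<in> vars p \<union> vars q" using ab by (auto simp: vars_def)
qed

lemma vars_add_le: "vars p \<subseteq> A \<Longrightarrow> vars q \<subseteq> A \<Longrightarrow> vars (p + q) \<subseteq> A"
  using vars_add[of p q] by blast
lemma vars_mult_le: "vars p \<subseteq> A \<Longrightarrow> vars q \<subseteq> A \<Longrightarrow> vars (p * q) \<subseteq> A"
  using vars_mult[of p q] by blast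

lemma vars_sum: "vars (sum f A) \<subseteq> (\<Union>a\<in>A. vars (f a))"
  by (induction A rule: infinite_finite_induct) (use vars_add in fastforce)+

lemma vars_prod: "vars (prod f A) \<subseteq> (\<Union>a\<in>A. vars (f a))"
  by (induction A rule: infinite_finite_induct) (use vars_mult in fastforce)+

lemma vars_power: "vars (p ^ n) \<subseteq> vars p"
  by (induction n) (use vars_mult in fastforce)+

lemma vars_psubst: "vars (psubst \<sigma> p) \<subseteq> (\<Union>v\<in>vars p. vars (\<sigma> v))"
proof -
  have "vars (psubst \<sigma> p)
      \<subseteq> (\<Union>mon\<in>Poly_Mapping.keys p. vars (pconst (Poly_Mapping.lookup p mon) * mon_eval \<sigma> mon))"
    unfolding psubst_mon_eval by (rule vars_sum)
  also have "\<dots> \<subseteq> (\<Union>v\<in>vars p. vars (\<sigma> v))"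
  proof (intro UN_least)
    fix mon assume mon: "mon \<in> Poly_Mapping.keys p"
    have "vars (pconst (Poly_Mapping.lookup p mon) * mon_eval \<sigma> mon) \<subseteq> vars (mon_eval \<sigma> mon)"
      using vars_mult by fastforce
    also have "\<dots> \<subseteq> (\<Union>v\<in>Poly_Mapping.keys mon. vars (\<sigma> v ^ Poly_Mapping.lookup mon v))"
      unfolding mon_eval_def by (rule vars_prod)
    also have "\<dots> \<subseteq> (\<Union>v\<in>vars p. vars (\<sigma> v))"
      using vars_power mon by (fastforce simp: vars_def)
    finally show "vars (pconst (Poly_Mapping.lookup p mon) * mon_eval \<sigma> mon) \<subseteq> (\<Union>v\<in>vars p. vars (\<sigma> v))" .
  qed
  finally show ?thesis .
qed

lemma Qc_varsD: "p \<in> Qc n \<Longrightarrow> v \<in> vars p \<Longrightarrow> 1 \<le> v \<and> v \<le> n"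
  by (auto simp: Qc_iff)

lemma Qc_add: "p \<in> Qc n \<Longrightarrow> q \<in> Qc n \<Longrightarrow> p + q \<in> Qc n"
  using vars_add[of p q] by (auto simp: Qc_iff)
lemma Qc_mult: "p \<in> Qc n \<Longrightarrow> q \<in> Qc n \<Longrightarrow> p * q \<in> Qc n"
  using vars_mult[of p q] by (auto simp: Qc_iff)
lemma Qc_pconst: "pconst c \<in> Qc n" by (simp add: Qc_iff)
lemma Qc_0: "0 \<in> Qc n" using Qc_pconst[of 0] by simp
lemma Qc_1: "1 \<in> Qc n" using Qc_pconst[of 1] by simp
lemma Qc_Xv: "1 \<le> k \<Longrightarrow> k \<le> n \<Longrightarrow> Xv k \<in> Qc n" using vars_Xv[of k] by (auto simp: Qc_iff)
lemma Qc_mono: "p \<in> Qc n \<Longrightarrow> n \<le> n' \<Longrightarrow> p \<in> Qc n'" by (auto simp: Qc_iff)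
lemma Qc_sum: "(\<And>a. a \<in> A \<Longrightarrow> F a \<in> Qc n) \<Longrightarrow> sum F A \<in> Qc n"
  by (induction A rule: infinite_finite_induct) (auto simp: Qc_0 Qc_add)

lemma Qc_psubst: "(\<And>v. v \<in> vars p \<Longrightarrow> \<sigma> v \<in> Qc N) \<Longrightarrow> psubst \<sigma> p \<in> Qc N"
  using vars_psubst[of \<sigma> p] by (fastforce simp: Qc_iff)

lemma psubst_Qc_cong:
  assumes "p \<in> Qc n" "\<And>v. 1 \<le> v \<Longrightarrow> v \<le> n \<Longrightarrow> \<sigma> v = \<tau> v"
  shows "psubst \<sigma> p = psubst \<tau> p"
  using assms by (intro psubst_cong) (auto dest: Qc_varsD)

section \<open>The polynomials \<open>\<theta>\<^sup>\<lambda>\<close>\<close>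

definition Tset :: "'a::comm_ring_1 \<Rightarrow> nat set \<Rightarrow> 'a kpoly" where
  "Tset lam S = (\<Sum>k=1..card S. pconst (lam ^ (k - 1)) * esym S k)"

lemma theta_Tset: "theta lam i m = Tset lam {i..<i+m}"
  by (simp add: theta_def Tset_def)

lemma esym_0: "finite A \<Longrightarrow> esym A 0 = 1"
proof -
  assume "finite A"
  then have "{S. S \<subseteq> A \<and> card S = 0} = {{}}"
    by (auto dest: finite_subset)
  then show ?thesis unfolding esym_def by simp
qed

lemma esym_big: "finite A \<Longrightarrow> card A < k \<Longrightarrow> esym A k = 0"
proof -
  assume A: "finite A" "card A < k"
  then have "{S. S \<subseteq> A \<and> card S = k} = {}"
    by (auto dest: card_mono[OF A(1)])
  then show ?thesis unfolding esym_def by (metis sum.empty)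
qed

lemma subsets_card_insert:
  assumes "finite A" "a \<notin> A" "1 \<le> k"
  shows "{S. S \<subseteq> insert a A \<and> card S = k}
       = {S. S \<subseteq> A \<and> card S = k} \<union> insert a ` {S. S \<subseteq> A \<and> card S = k - 1}"
proof (intro equalityI subsetI)
  fix S assume "S \<in> {S. S \<subseteq> insert a A \<and> card S = k}"
  then have S: "S \<subseteq> insert a A" "card S = k" "finite S"
    using assms(1) by (auto dest: finite_subset)
  show "S \<in> {S. S \<subseteq> A \<and> card S = k} \<union> insert a ` {S. S \<subseteq> A \<and> card S = k - 1}"
  proof (cases "a \<in> S")
    case True
    then have "S = insert a (S - {a})" "S - {a} \<subseteq> A" "card (S - {a}) = k - 1"
      using S by auto
    then show ?thesis by blast
  next
    case False
    then show ?thesis using S by blast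
  qed
next
  fix S assume "S \<in> {S. S \<subseteq> A \<and> card S = k} \<union> insert a ` {S. S \<subseteq> A \<and> card S = k - 1}"
  then show "S \<in> {S. S \<subseteq> insert a A \<and> card S = k}"
  proof
    assume "S \<in> insert a ` {S. S \<subseteq> A \<and> card S = k - 1}"
    then obtain S' where S': "S = insert a S'" "S' \<subseteq> A" "card S' = k - 1" by blast
    moreover have "finite S'" "a \<notin> S'" using S' assms(1,2) by (auto dest: finite_subset)
    ultimately show ?thesis using assms(3) by auto
  qed blast
qed

lemma esym_insert:
  assumes "finite A" "a \<notin> A" "1 \<le> k"
  shows "esym (insert a A) k = esym A k + Xv a * esym A (k - 1)"
proof -
  let ?Sk = "{S. S \<subseteq> A \<and> card S = k}" and ?Sk' = "{S. S \<subseteq> A \<and> card S = k - 1}"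
  have fin: "finite ?Sk" "finite ?Sk'" using assms(1) by (simp_all add: finite_Collect_subsets)
  have disj: "?Sk \<inter> insert a ` ?Sk' = {}" using assms(2) by blast
  have inj: "inj_on (insert a) ?Sk'"
    using assms(2) by (intro inj_onI) (metis Diff_insert_absorb mem_Collect_eq subsetD)
  have "esym (insert a A) k = (\<Sum>S\<in>?Sk. \<Prod>j\<in>S. Xv j) + (\<Sum>S\<in>insert a ` ?Sk'. \<Prod>j\<in>S. Xv j)"
    unfolding esym_def subsets_card_insert[OF assms] using fin disj by (simp add: sum.union_disjoint)
  also have "(\<Sum>S\<in>insert a ` ?Sk'. \<Prod>j\<in>S. Xv j) = (\<Sum>S\<in>?Sk'. Xv a * (\<Prod>j\<in>S. Xv j))"
    unfolding sum.reindex[OF inj] comp_def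
  proof (rule sum.cong[OF refl])
    fix S assume "S \<in> ?Sk'"
    then have "finite S" "a \<notin> S" using assms(1,2) by (auto dest: finite_subset)
    then show "prod Xv (insert a S) = Xv a * (\<Prod>j\<in>S. Xv j)" by simp
  qed
  finally show ?thesis by (simp add: esym_def sum_distrib_left)
qed

lemma Tset_empty [simp]: "Tset lam {} = 0" by (simp add: Tset_def)

lemma Tset_insert:
  assumes "finite A" "a \<notin> A"
  shows "Tset lam (insert a A) = Tset lam A + Xv a + pconst lam * Tset lam A * Xv a"
proof -
  let ?n = "card A"
  let ?c = "\<lambda>k. pconst (lam ^ (k - 1))"
  have "Tset lam (insert a A) = (\<Sum>k=1..Suc ?n. ?c k * (esym A k + Xv a * esym A (k - 1)))"
    unfolding Tset_def using assms by (simp add: esym_insert)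
  also have "\<dots> = (\<Sum>k=1..Suc ?n. ?c k * esym A k) + Xv a * (\<Sum>k=1..Suc ?n. ?c k * esym A (k - 1))"
    by (simp add: distrib_left sum.distrib sum_distrib_left mult_ac)
  also have "(\<Sum>k=1..Suc ?n. ?c k * esym A k) = Tset lam A"
    unfolding Tset_def using assms by (simp add: esym_big)
  also have "(\<Sum>k=1..Suc ?n. ?c k * esym A (k - 1)) = (\<Sum>k=0..?n. ?c (Suc k) * esym A k)"
    using sum.shift_bounds_cl_Suc_ivl[of "\<lambda>k. ?c k * esym A (k - 1)" 0 ?n] by simp
  also have "\<dots> = ?c 1 * esym A 0 + (\<Sum>k=1..?n. ?c (Suc k) * esym A k)"
    by (subst sum.atLeast_Suc_atMost) auto
  also have "(\<Sum>k=1..?n. ?c (Suc k) * esym A k) = pconst lam * Tset lam A"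
    unfolding Tset_def sum_distrib_left
  proof (rule sum.cong[OF refl])
    fix k assume "k \<in> {1..?n}"
    then have "lam ^ (Suc k - 1) = lam * lam ^ (k - 1)" by (cases k) auto
    then show "?c (Suc k) * esym A k = pconst lam * (?c k * esym A k)"
      by (simp add: pconst_mult mult_ac)
  qed
  also have "?c 1 * esym A 0 = 1" using assms by (simp add: esym_0)
  finally show ?thesis by (simp add: algebra_simps)
qed

lemma Tset_single: "Tset lam {a} = Xv a"
  using Tset_insert[of "{}" a lam] by simp

lemma Tset_union:
  assumes "finite A" "finite B" "A \<inter> B = {}"
  shows "Tset lam (A \<union> B) = Tset lam A + Tset lam B + pconst lam * Tset lam A * Tset lam B"
  using assms(2,3)
proof (induction B rule: finite_induct)
  case (insert b B)
  have "Tset lam (A \<union> insert b B) = Tset lam (A \<union> B) + Xv b + pconst lam * Tset lam (A \<union> B) * Xv b"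
    using insert assms(1) Tset_insert[of "A \<union> B" b lam] by auto
  moreover have "Tset lam (insert b B) = Tset lam B + Xv b + pconst lam * Tset lam B * Xv b"
    using insert by (intro Tset_insert) auto
  ultimately show ?case using insert by (simp add: algebra_simps)
qed simp

lemma Tset_rename:
  assumes "finite A" "inj_on g A" "\<And>v. v \<in> A \<Longrightarrow> \<sigma> v = Xv (g v)"
  shows "psubst \<sigma> (Tset lam A) = Tset lam (g ` A)"
  using assms
proof (induction A rule: finite_induct)
  case (insert x F)
  then have "g x \<notin> g ` F" by auto
  then show ?case using insert by (simp add: Tset_insert psubst_add psubst_mult)
qed simp

lemma vars_Tset: "finite A \<Longrightarrow> vars (Tset lam A) \<subseteq> A"
proof (induction A rule: finite_induct)
  case (insert x F)
  have "vars (Tset lam F + Xv x + pconst lam * Tset lam F * Xv x) \<subseteq> insert x F"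
    using insert(3) vars_Xv[of x] by (intro vars_add_le vars_mult_le) auto
  then show ?case by (simp only: Tset_insert[OF insert(1,2)])
qed (simp add: vars_def Tset_def)

lemma Tset_subst:
  assumes "finite S" "a \<in> S" "inj_on g (S - {a})" "finite B" "B \<inter> g ` (S - {a}) = {}"
    "\<And>v. v \<in> S - {a} \<Longrightarrow> \<sigma> v = Xv (g v)" "\<sigma> a = Tset lam B"
  shows "psubst \<sigma> (Tset lam S) = Tset lam (g ` (S - {a}) \<union> B)"
proof -
  have "Tset lam S = Tset lam (S - {a}) + Xv a + pconst lam * Tset lam (S - {a}) * Xv a"
    using Tset_insert[of "S - {a}" a lam] assms(1,2) by (simp add: insert_absorb)
  then have "psubst \<sigma> (Tset lam S)
      = Tset lam (g ` (S - {a})) + Tset lam B + pconst lam * Tset lam (g ` (S - {a})) * Tset lam B"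
    using assms Tset_rename[of "S - {a}" g \<sigma> lam] by (simp add: psubst_add psubst_mult)
  also have "\<dots> = Tset lam (g ` (S - {a}) \<union> B)"
    using assms by (subst Tset_union) auto
  finally show ?thesis .
qed

lemma theta_shift:
  assumes "\<And>w. i \<le> w \<Longrightarrow> w < i + m \<Longrightarrow> \<sigma> w = Xv (w + c)"
  shows "psubst \<sigma> (theta lam i m) = theta lam (i + c) m"
proof -
  have "psubst \<sigma> (Tset lam {i..<i+m}) = Tset lam ((\<lambda>w. w + c) ` {i..<i+m})"
    using assms by (intro Tset_rename) (auto simp: inj_on_def)
  also have "(\<lambda>w. w + c) ` {i..<i+m} = {i+c..<i+c+m}"
    by (simp add: add.commute add.left_commute)
  finally show ?thesis by (simp add: theta_Tset)
qed

lemma theta_nest: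
  assumes ia: "i \<le> a" "a < i + m" and k: "1 \<le> k"
    and below: "\<And>w. i \<le> w \<Longrightarrow> w < a \<Longrightarrow> \<sigma> w = Xv w"
    and at: "\<sigma> a = theta lam a k"
    and above: "\<And>w. a < w \<Longrightarrow> w < i + m \<Longrightarrow> \<sigma> w = Xv (w + k - 1)"
  shows "psubst \<sigma> (theta lam i m) = theta lam i (m + k - 1)"
proof -
  define g where "g w = (if w < a then w else w + k - 1)" for w
  let ?S = "{i..<i+m}"
  have merged: "g ` (?S - {a}) \<union> {a..<a+k} = {i..<i + (m + k - 1)}"
  proof (intro equalityI subsetI)
    fix w assume w: "w \<in> {i..<i + (m + k - 1)}"
    consider "w < a" | "a \<le> w" "w < a + k" | "a + k \<le> w" by linarith
    then show "w \<in> g ` (?S - {a}) \<union> {a..<a+k}"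
    proof cases
      case 1
      then show ?thesis using w ia by (intro UnI1 rev_image_eqI[of w]) (auto simp: g_def)
    next
      case 3
      then show ?thesis using w ia k by (intro UnI1 rev_image_eqI[of "w + 1 - k"]) (auto simp: g_def)
    qed auto
  qed (use ia k in \<open>auto simp: g_def\<close>)
  have "psubst \<sigma> (Tset lam ?S) = Tset lam (g ` (?S - {a}) \<union> {a..<a+k})"
  proof (rule Tset_subst)
    show "inj_on g (?S - {a})" using k by (auto simp: inj_on_def g_def split: if_splits)
    show "{a..<a + k} \<inter> g ` (?S - {a}) = {}" using k by (auto simp: g_def)
    show "\<And>v. v \<in> ?S - {a} \<Longrightarrow> \<sigma> v = Xv (g v)" using below above by (auto simp: g_def)
    show "\<sigma> a = Tset lam {a..<a + k}" using at by (simp add: theta_Tset)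
  qed (use ia in auto)
  then show ?thesis using merged by (simp add: theta_Tset)
qed

lemma theta_1: "theta lam i 1 = Xv i"
  by (simp add: theta_Tset Tset_single)

lemma theta_1_2: "theta lam 1 2 = Xv 1 + Xv 2 + pconst lam * Xv 1 * Xv 2"
proof -
  have "{1..<1+2} = insert (2::nat) {1}" by auto
  then show ?thesis by (simp add: theta_Tset Tset_insert Tset_single)
qed

lemma Qc_theta: "1 \<le> i \<Longrightarrow> i + m \<le> n + 1 \<Longrightarrow> theta lam i m \<in> Qc n"
  using vars_Tset[of "{i..<i+m}" lam] by (auto simp: theta_Tset Qc_iff)

section \<open>\<open>Q\<^sup>\<lambda>\<close> is a non-symmetric operad\<close>

definition ins_sub :: "'a::comm_ring_1 \<Rightarrow> nat \<Rightarrow> nat \<Rightarrow> nat \<Rightarrow> 'a kpoly" where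
  "ins_sub lam i m j = (if j < i then Xv j else if j = i then theta lam i m else Xv (j + m - 1))"

definition place :: "nat \<Rightarrow> nat \<Rightarrow> 'a::comm_ring_1 kpoly" where
  "place i j = Xv (j + i - 1)"

lemma qcomp_subst: "qcomp lam n m i P Q = psubst (ins_sub lam i m) P * psubst (place i) Q"
  by (simp add: qcomp_def ins_sub_def[abs_def] place_def[abs_def])

lemma ins_sub_1 [simp]: "ins_sub lam i (Suc 0) = Xv"
  by (rule ext) (simp add: ins_sub_def theta_1[unfolded One_nat_def])

lemma place_1 [simp]: "place (Suc 0) = Xv"
  by (rule ext) (simp add: place_def)

text \<open>The variable-wise identities behind sequential associativity: substituting into the
  inserted block merges the blocks (\<open>ins_sub_nest\<close>), insertion commutes with placement
  (\<open>ins_sub_place\<close>), and placements compose (\<open>place_place\<close>).\<close>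
lemma ins_sub_nest:
  assumes "i \<le> a" "a < i + m" "1 \<le> k"
  shows "(\<lambda>v. psubst (ins_sub lam a k) (ins_sub lam i m v)) = ins_sub lam i (m + k - 1)"
proof
  fix v
  consider "v < i" | "v = i" | "i < v" by linarith
  then show "psubst (ins_sub lam a k) (ins_sub lam i m v) = ins_sub lam i (m + k - 1) v"
  proof cases
    case 2
    have "psubst (ins_sub lam a k) (theta lam i m) = theta lam i (m + k - 1)"
      by (rule theta_nest[where a = a]) (use assms in \<open>auto simp: ins_sub_def\<close>)
    then show ?thesis using 2 by (simp add: ins_sub_def)
  qed (use assms in \<open>auto simp: ins_sub_def intro!: arg_cong[where f = Xv]\<close>)
qed

lemma ins_sub_place:
  assumes "1 \<le> i" "1 \<le> k"
  shows "(\<lambda>v. psubst (ins_sub lam (i - 1 + j) k) (place i v))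
       = (\<lambda>v. psubst (place i) (ins_sub lam j k v))"
proof
  fix v
  consider "v < j" | "v = j" | "j < v" by linarith
  then show "psubst (ins_sub lam (i - 1 + j) k) (place i v) = psubst (place i) (ins_sub lam j k v)"
  proof cases
    case 2
    have "psubst (place i) (theta lam j k) = theta lam (j + (i - 1)) k"
      by (rule theta_shift) (use assms in \<open>simp add: place_def\<close>)
    then show ?thesis using 2 assms by (simp add: ins_sub_def place_def add.commute)
  qed (use assms in \<open>auto simp: ins_sub_def place_def intro!: arg_cong[where f = Xv]\<close>)
qed

lemma place_place:
  assumes "1 \<le> i" "1 \<le> j"
  shows "(\<lambda>v. psubst (place i) (place j v)) = place (i - 1 + j)"
proof
  fix v
  have "v + j - 1 + i - 1 = v + (i - 1 + j) - 1" using assms by linarith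
  then show "psubst (place i) (place j v) = place (i - 1 + j) v" by (simp add: place_def)
qed

text \<open>The variable-wise identities behind parallel associativity (\<open>i < j\<close>): the two
  insertions commute, and each leaves the other's placed variables alone.\<close>
lemma ins_sub_commute:
  assumes "i < j" "1 \<le> m" "1 \<le> k"
  shows "(\<lambda>v. psubst (ins_sub lam (j + m - 1) k) (ins_sub lam i m v))
       = (\<lambda>v. psubst (ins_sub lam i m) (ins_sub lam j k v))"
proof
  fix v
  consider "v < i" | "v = i" | "i < v" "v < j" | "v = j" | "j < v" by linarith
  then show "psubst (ins_sub lam (j + m - 1) k) (ins_sub lam i m v)
           = psubst (ins_sub lam i m) (ins_sub lam j k v)"
  proof cases
    case 2
    have "psubst (ins_sub lam (j + m - 1) k) (theta lam i m) = theta lam (i + 0) m"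
      by (rule theta_shift) (use assms in \<open>auto simp: ins_sub_def\<close>)
    then show ?thesis using 2 assms by (simp add: ins_sub_def)
  next
    case 4
    have "psubst (ins_sub lam i m) (theta lam j k) = theta lam (j + (m - 1)) k"
      by (rule theta_shift) (use assms in \<open>auto simp: ins_sub_def\<close>)
    then show ?thesis using 4 assms by (simp add: ins_sub_def)
  qed (use assms in \<open>auto simp: ins_sub_def intro!: arg_cong[where f = Xv]\<close>)
qed

lemma ins_sub_fixes_place:
  assumes "i < j" "1 \<le> v" "v \<le> m"
  shows "psubst (ins_sub lam (j + m - 1) k) (place i v) = place i v"
proof -
  have "v + i - 1 < j + m - 1" using assms by linarith
  then show ?thesis by (simp add: ins_sub_def place_def)
qed

lemma ins_sub_shifts_place:
  assumes "i < j" "1 \<le> v"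
  shows "psubst (ins_sub lam i m) (place j v) = place (j + m - 1) v"
proof -
  have "i < v + j - 1" "v + j - 1 + m - 1 = v + (j + m - 1) - 1" using assms by linarith+
  then show ?thesis by (simp add: ins_sub_def place_def)
qed

lemma qcomp_Qc:
  assumes "1 \<le> m" "1 \<le> i" "i \<le> n" "P \<in> Qc n" "Q \<in> Qc m"
  shows "qcomp lam n m i P Q \<in> Qc (n + m - 1)"
  unfolding qcomp_subst
proof (intro Qc_mult Qc_psubst)
  fix v assume "v \<in> vars P"
  then have "1 \<le> v" "v \<le> n" using Qc_varsD[OF assms(4)] by auto
  then show "ins_sub lam i m v \<in> Qc (n + m - 1)"
    using assms by (auto simp: ins_sub_def intro!: Qc_Xv Qc_theta)
next
  fix v assume "v \<in> vars Q"
  then have "1 \<le> v" "v \<le> m" using Qc_varsD[OF assms(5)] by auto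
  then show "place i v \<in> Qc (n + m - 1)"
    using assms by (auto simp: place_def intro!: Qc_Xv)
qed

lemma qcomp_seq:
  assumes "1 \<le> i" "1 \<le> j" "j \<le> m" "1 \<le> k"
  shows "qcomp lam (l + m - 1) k (i - 1 + j) (qcomp lam l m i x y) z =
         qcomp lam l (m + k - 1) i x (qcomp lam m k j y z)"
proof -
  have "qcomp lam (l + m - 1) k (i - 1 + j) (qcomp lam l m i x y) z
      = psubst (\<lambda>v. psubst (ins_sub lam (i - 1 + j) k) (ins_sub lam i m v)) x
      * psubst (\<lambda>v. psubst (ins_sub lam (i - 1 + j) k) (place i v)) y * psubst (place (i - 1 + j)) z"
    by (simp add: qcomp_subst psubst_mult psubst_comp)
  also have "\<dots> = psubst (ins_sub lam i (m + k - 1)) x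
      * psubst (\<lambda>v. psubst (place i) (ins_sub lam j k v)) y
      * psubst (\<lambda>v. psubst (place i) (place j v)) z"
    using assms by (simp only: ins_sub_nest[of i "i - 1 + j" m k lam] ins_sub_place place_place)
  also have "\<dots> = qcomp lam l (m + k - 1) i x (qcomp lam m k j y z)"
    by (simp add: qcomp_subst psubst_mult psubst_comp mult.assoc)
  finally show ?thesis .
qed

text \<open>Parallel associativity; here the placed variables must lie in the expected range.\<close>
lemma qcomp_par:
  assumes "i < j" "1 \<le> m" "1 \<le> k" "y \<in> Qc m" "z \<in> Qc k"
  shows "qcomp lam (l + m - 1) k (j + m - 1) (qcomp lam l m i x y) z =
         qcomp lam (l + k - 1) m i (qcomp lam l k j x z) y"
proof -
  have fix_y: "psubst (\<lambda>v. psubst (ins_sub lam (j + m - 1) k) (place i v)) y = psubst (place i) y"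
    using assms by (intro psubst_Qc_cong[OF assms(4)] ins_sub_fixes_place)
  have shift_z: "psubst (place (j + m - 1)) z = psubst (\<lambda>v. psubst (ins_sub lam i m) (place j v)) z"
    using assms by (intro psubst_Qc_cong[OF assms(5)] ins_sub_shifts_place[symmetric])
  have "qcomp lam (l + m - 1) k (j + m - 1) (qcomp lam l m i x y) z
      = psubst (\<lambda>v. psubst (ins_sub lam (j + m - 1) k) (ins_sub lam i m v)) x
      * psubst (\<lambda>v. psubst (ins_sub lam (j + m - 1) k) (place i v)) y * psubst (place (j + m - 1)) z"
    by (simp add: qcomp_subst psubst_mult psubst_comp)
  also have "\<dots> = psubst (\<lambda>v. psubst (ins_sub lam i m) (ins_sub lam j k v)) x
      * psubst (place i) y * psubst (\<lambda>v. psubst (ins_sub lam i m) (place j v)) z"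
    using assms by (simp only: ins_sub_commute fix_y shift_z)
  also have "\<dots> = qcomp lam (l + k - 1) m i (qcomp lam l k j x z) y"
    by (simp add: qcomp_subst psubst_mult psubst_comp mult_ac)
  finally show ?thesis .
qed

lemma Q_operad: "ns_operad (Qc :: nat \<Rightarrow> 'a::comm_ring_1 kpoly set) qsc 1 (qcomp lam)"
  unfolding ns_operad_def
proof (intro conjI allI impI ballI)
  fix n m i :: nat and a b :: 'a and x x' y y' :: "'a kpoly"
  show "(0::'a kpoly) \<in> Qc n" by (rule Qc_0)
  show "x \<in> Qc n \<Longrightarrow> y \<in> Qc n \<Longrightarrow> x + y \<in> Qc n" by (rule Qc_add)
  show "x \<in> Qc n \<Longrightarrow> qsc a x \<in> Qc n" by (simp add: qsc_def Qc_mult Qc_pconst)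
  show "qsc a (x + y) = qsc a x + qsc a y" by (simp add: qsc_def distrib_left)
  show "qsc (a + b) x = qsc a x + qsc b x" by (simp add: qsc_def pconst_add distrib_right)
  show "qsc (a * b) x = qsc a (qsc b x)" by (simp add: qsc_def pconst_mult mult_ac)
  show "qsc 1 x = x" by (simp add: qsc_def)
  show "(1::'a kpoly) \<in> Qc 1" by (rule Qc_1)
  show "1 \<le> m \<Longrightarrow> 1 \<le> i \<Longrightarrow> i \<le> n \<Longrightarrow> x \<in> Qc n \<Longrightarrow> y \<in> Qc m \<Longrightarrow> qcomp lam n m i x y \<in> Qc (n + m - 1)"
    by (rule qcomp_Qc)
  show "qcomp lam n m i (x + x') y = qcomp lam n m i x y + qcomp lam n m i x' y"
    "qcomp lam n m i x (y + y') = qcomp lam n m i x y + qcomp lam n m i x y'"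
    by (simp_all add: qcomp_subst psubst_add algebra_simps)
  show "qcomp lam n m i (qsc a x) y = qsc a (qcomp lam n m i x y)"
    "qcomp lam n m i x (qsc a y) = qsc a (qcomp lam n m i x y)"
    by (simp_all add: qcomp_subst qsc_def psubst_mult mult_ac)
  show "qcomp lam 1 n 1 1 x = x" "qcomp lam n 1 i x 1 = x"
    by (simp_all add: qcomp_subst)
next
  fix l m k i j :: nat and x y z :: "'a kpoly"
  show "1 \<le> i \<Longrightarrow> i \<le> l \<Longrightarrow> 1 \<le> j \<Longrightarrow> j \<le> m \<Longrightarrow> 1 \<le> k \<Longrightarrow> x \<in> Qc l \<Longrightarrow> y \<in> Qc m \<Longrightarrow> z \<in> Qc k \<Longrightarrow>
    qcomp lam (l + m - 1) k (i - 1 + j) (qcomp lam l m i x y) z = qcomp lam l (m + k - 1) i x (qcomp lam m k j y z)"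
    by (rule qcomp_seq)
  show "1 \<le> i \<Longrightarrow> i < j \<Longrightarrow> j \<le> l \<Longrightarrow> 1 \<le> m \<Longrightarrow> 1 \<le> k \<Longrightarrow> x \<in> Qc l \<Longrightarrow> y \<in> Qc m \<Longrightarrow> z \<in> Qc k \<Longrightarrow>
    qcomp lam (l + m - 1) k (j + m - 1) (qcomp lam l m i x y) z = qcomp lam (l + k - 1) m i (qcomp lam l k j x z) y"
    by (rule qcomp_par)
qed

section \<open>The free operad on \<open>D\<close> and \<open>\<mu>\<close>\<close>

lemma lookup_fsc [simp]: "Poly_Mapping.lookup (fsc a f) t = a * Poly_Mapping.lookup f t"
proof -
  have "Poly_Mapping.lookup (fsc a f) t
      = (\<Sum>t'\<in>Poly_Mapping.keys f. if t' = t then a * Poly_Mapping.lookup f t' else 0)"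
    unfolding fsc_def lookup_sum by (intro sum.cong refl) (simp add: lookup_single when_def)
  also have "\<dots> = a * Poly_Mapping.lookup f t"
    by (cases "t \<in> Poly_Mapping.keys f") (simp_all add: sum.delta' in_keys_iff)
  finally show ?thesis .
qed

lemma fsc_diff: "fsc a (f - g) = fsc a f - fsc a g"
  by (rule poly_mapping_eqI) (simp add: lookup_minus right_diff_distrib)
lemma fsc_single: "fsc a (Poly_Mapping.single t b) = Poly_Mapping.single t (a * b)"
  by (rule poly_mapping_eqI) (simp add: lookup_single when_def)
lemma keys_fsc: "Poly_Mapping.keys (fsc a f) \<subseteq> Poly_Mapping.keys f"
  by (auto simp: in_keys_iff)

lemma expand_trees: "g = (\<Sum>s\<in>Poly_Mapping.keys g. fsc (Poly_Mapping.lookup g s) (ft s))"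
  by (simp add: ft_def fsc_single sum_single_keys)

lemma fcomp_superset:
  assumes "finite SA" "Poly_Mapping.keys f \<subseteq> SA" "finite SB" "Poly_Mapping.keys g \<subseteq> SB"
  shows "fcomp i f g = (\<Sum>t\<in>SA. \<Sum>s\<in>SB.
     Poly_Mapping.single (graft i t s) (Poly_Mapping.lookup f t * Poly_Mapping.lookup g s))"
proof -
  have "fcomp i f g = (\<Sum>t\<in>SA. \<Sum>s\<in>Poly_Mapping.keys g.
      Poly_Mapping.single (graft i t s) (Poly_Mapping.lookup f t * Poly_Mapping.lookup g s))"
    unfolding fcomp_def using assms by (intro sum.mono_neutral_left) (auto simp: in_keys_iff)
  also have "\<dots> = (\<Sum>t\<in>SA. \<Sum>s\<in>SB.
      Poly_Mapping.single (graft i t s) (Poly_Mapping.lookup f t * Poly_Mapping.lookup g s))"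
    using assms by (intro sum.cong refl sum.mono_neutral_left) (auto simp: in_keys_iff)
  finally show ?thesis .
qed

lemma fcomp_add_left: "fcomp i (f + f') g = fcomp i f g + fcomp i f' g"
  by (subst (1 2 3) fcomp_superset[where SA = "Poly_Mapping.keys f \<union> Poly_Mapping.keys f'"
        and SB = "Poly_Mapping.keys g"])
     (use keys_add[of f f'] in \<open>auto simp: lookup_add distrib_right single_add sum.distrib\<close>)

lemma fcomp_add_right: "fcomp i f (g + g') = fcomp i f g + fcomp i f g'"
  by (subst (1 2 3) fcomp_superset[where SB = "Poly_Mapping.keys g \<union> Poly_Mapping.keys g'"
        and SA = "Poly_Mapping.keys f"])
     (use keys_add[of g g'] in \<open>auto simp: lookup_add distrib_left single_add sum.distrib\<close>)

lemma fcomp_fsc_left: "fcomp i (fsc a f) g = fsc a (fcomp i f g)"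
proof -
  have "fcomp i (fsc a f) g = (\<Sum>t\<in>Poly_Mapping.keys f. \<Sum>s\<in>Poly_Mapping.keys g.
       Poly_Mapping.single (graft i t s) (a * Poly_Mapping.lookup f t * Poly_Mapping.lookup g s))"
    using keys_fsc
    by (subst fcomp_superset[where SA = "Poly_Mapping.keys f" and SB = "Poly_Mapping.keys g"])
       (auto simp: mult_ac)
  also have "\<dots> = fsc a (fcomp i f g)"
    unfolding fcomp_def
    by (rule poly_mapping_eqI)
       (simp add: lookup_sum sum_distrib_left lookup_single when_def mult_ac, intro sum.cong refl, simp)
  finally show ?thesis .
qed

lemma fcomp_fsc_right: "fcomp i f (fsc a g) = fsc a (fcomp i f g)"
proof -
  have "fcomp i f (fsc a g) = (\<Sum>t\<in>Poly_Mapping.keys f. \<Sum>s\<in>Poly_Mapping.keys g.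
       Poly_Mapping.single (graft i t s) (a * Poly_Mapping.lookup f t * Poly_Mapping.lookup g s))"
    using keys_fsc
    by (subst fcomp_superset[where SA = "Poly_Mapping.keys f" and SB = "Poly_Mapping.keys g"])
       (auto simp: mult_ac)
  also have "\<dots> = fsc a (fcomp i f g)"
    unfolding fcomp_def
    by (rule poly_mapping_eqI)
       (simp add: lookup_sum sum_distrib_left lookup_single when_def mult_ac, intro sum.cong refl, simp)
  finally show ?thesis .
qed

lemma fcomp_diff_left: "fcomp i (f - f') g = fcomp i f g - fcomp i f' g"
  using fcomp_add_left[of i "f - f'" f' g] by (simp add: algebra_simps)
lemma fcomp_diff_right: "fcomp i f (g - g') = fcomp i f g - fcomp i f g'"
  using fcomp_add_right[of i f "g - g'" g'] by (simp add: algebra_simps)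

lemma fcomp_zero_right [simp]: "fcomp i f 0 = 0" by (simp add: fcomp_def)

lemma fcomp_sum_right: "fcomp i f (sum G A) = (\<Sum>a\<in>A. fcomp i f (G a))"
  by (induction A rule: infinite_finite_induct) (auto simp: fcomp_add_right)

lemma fcomp_ft: "fcomp i (ft t) (ft s) = ft (graft i t s)"
  by (subst fcomp_superset[where SA = "{t}" and SB = "{s}"]) (auto simp: ft_def)

lemma fcomp_ft_expand:
  "fcomp i (ft T) g = (\<Sum>s\<in>Poly_Mapping.keys g. fsc (Poly_Mapping.lookup g s) (ft (graft i T s)))"
  by (subst (1) expand_trees) (simp add: fcomp_sum_right fcomp_fsc_right fcomp_ft)

lemma leaves_pos: "1 \<le> leaves t"
  by (induction t) auto

lemma leaves_graft: "1 \<le> i \<Longrightarrow> i \<le> leaves t \<Longrightarrow> leaves (graft i t s) = leaves t + leaves s - 1"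
  by (induction t arbitrary: i) (use leaves_pos in \<open>auto simp: le_diff_conv\<close>)

lemma Fc_0: "0 \<in> Fc n" by (simp add: Fc_def)
lemma Fc_add: "f \<in> Fc n \<Longrightarrow> g \<in> Fc n \<Longrightarrow> f + g \<in> Fc n"
  using keys_add[of f g] by (auto simp: Fc_def)
lemma Fc_fsc: "f \<in> Fc n \<Longrightarrow> fsc a f \<in> Fc n"
  using keys_fsc[of a f] by (auto simp: Fc_def)
lemma Fc_diff: "f \<in> Fc n \<Longrightarrow> g \<in> Fc n \<Longrightarrow> f - g \<in> Fc n"
  using Fc_add[of f n "-g"] by (simp add: Fc_def)
lemma Fc_single: "leaves t = n \<Longrightarrow> Poly_Mapping.single t a \<in> Fc n"
  by (simp add: Fc_def)
lemma Fc_ft: "leaves t = n \<Longrightarrow> ft t \<in> Fc n"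
  by (simp add: ft_def Fc_single)
lemma Fc_sum: "(\<And>a. a \<in> A \<Longrightarrow> F a \<in> Fc n) \<Longrightarrow> sum F A \<in> Fc n"
  by (induction A rule: infinite_finite_induct) (auto simp: Fc_0 Fc_add)

lemma Fc_fcomp:
  assumes "f \<in> Fc l" "g \<in> Fc m" "1 \<le> i" "i \<le> l"
  shows "fcomp i f g \<in> Fc (l + m - 1)"
  unfolding fcomp_def using assms by (intro Fc_sum Fc_single) (auto simp: Fc_def leaves_graft)

lemma asder_ideal_Fc: "(n, f) \<in> asder_ideal lam \<Longrightarrow> f \<in> Fc n"
  by (induction rule: asder_ideal.induct)
     (auto simp: rel_assoc_def rel_der_def Fc_0 Fc_add Fc_fsc Fc_diff Fc_ft intro: Fc_fcomp[simplified])

section \<open>The morphism from the free operad to \<open>Q\<^sup>\<lambda>\<close>\<close>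

fun phit :: "'a::comm_ring_1 \<Rightarrow> optree \<Rightarrow> 'a kpoly" where
  "phit lam Leaf = 1"
| "phit lam (Dn t) = theta lam 1 (leaves t) * phit lam t"
| "phit lam (Mu t u) = phit lam t * psubst (place (leaves t + 1)) (phit lam u)"

lemma phit_Qc: "phit lam t \<in> Qc (leaves t)"
proof (induction t)
  case (Mu t u)
  have "psubst (place (leaves t + 1)) (phit lam u) \<in> Qc (leaves t + leaves u)"
  proof (rule Qc_psubst)
    fix v assume "v \<in> vars (phit lam u)"
    then have "1 \<le> v" "v \<le> leaves u" using Qc_varsD[OF Mu(2)] by auto
    then show "place (leaves t + 1) v \<in> Qc (leaves t + leaves u)" by (auto simp: place_def intro!: Qc_Xv)
  qed
  moreover have "phit lam t \<in> Qc (leaves t + leaves u)" using Mu(1) by (rule Qc_mono) simp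
  ultimately show ?case by (simp add: Qc_mult)
qed (simp_all add: Qc_1 Qc_mult Qc_theta)

lemma ins_sub_theta_prefix:
  assumes "1 \<le> i" "i \<le> L" "1 \<le> M"
  shows "psubst (ins_sub lam i M) (theta lam 1 L) = theta lam 1 (L + M - 1)"
  by (rule theta_nest[where a = i]) (use assms in \<open>auto simp: ins_sub_def\<close>)

lemma phit_graft:
  assumes "1 \<le> i" "i \<le> leaves t"
  shows "phit lam (graft i t s) = qcomp lam (leaves t) (leaves s) i (phit lam t) (phit lam s)"
  using assms
proof (induction t arbitrary: i)
  case Leaf
  then show ?case by (simp add: qcomp_subst)
next
  case (Dn t)
  let ?L = "leaves t" and ?M = "leaves s"
  have theta: "psubst (ins_sub lam i ?M) (theta lam 1 ?L) = theta lam 1 (?L + ?M - 1)"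
    using Dn.prems leaves_pos[of s] by (intro ins_sub_theta_prefix) simp_all
  have "phit lam (graft i (Dn t) s) = theta lam 1 (?L + ?M - 1) * qcomp lam ?L ?M i (phit lam t) (phit lam s)"
    using Dn by (simp add: leaves_graft)
  also have "\<dots> = qcomp lam ?L ?M i (theta lam 1 ?L * phit lam t) (phit lam s)"
    by (simp only: qcomp_subst psubst_mult theta mult.assoc)
  finally show ?case by simp
next
  case (Mu t u)
  let ?P = "leaves t" and ?Q = "leaves u" and ?M = "leaves s"
  show ?case
  proof (cases "i \<le> ?P")
    case True
    have "psubst (ins_sub lam i ?M) (psubst (place (?P + 1)) (phit lam u))
        = psubst (place (?P + ?M)) (phit lam u)"
      unfolding psubst_comp using True leaves_pos[of s]
      by (intro psubst_Qc_cong[OF phit_Qc]) (simp add: ins_sub_shifts_place)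
    then show ?thesis
      using Mu True leaves_pos[of s] by (simp add: leaves_graft qcomp_subst psubst_mult mult_ac)
  next
    case False
    have i': "1 \<le> i - ?P" "i - ?P \<le> ?Q" "?P + 1 - 1 + (i - ?P) = i" using False Mu.prems by auto
    have "psubst (ins_sub lam i ?M) (phit lam t) = psubst Xv (phit lam t)"
      by (rule psubst_Qc_cong[OF phit_Qc]) (use False in \<open>simp add: ins_sub_def\<close>)
    then have t_fixed: "psubst (ins_sub lam i ?M) (phit lam t) = phit lam t" by simp
    have "psubst (ins_sub lam i ?M) (psubst (place (?P + 1)) (phit lam u))
        = psubst (place (?P + 1)) (psubst (ins_sub lam (i - ?P) ?M) (phit lam u))"
      using ins_sub_place[of "?P + 1" ?M lam "i - ?P"] leaves_pos[of s] i' by (simp add: psubst_comp)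
    moreover have "psubst (place (?P + 1)) (psubst (place (i - ?P)) (phit lam s))
        = psubst (place i) (phit lam s)"
    proof -
      have "(\<lambda>v. psubst (place (?P + 1)) (place (i - ?P) v)) = place i"
        using place_place[of "?P + 1" "i - ?P"] i' by simp
      then show ?thesis by (metis psubst_comp)
    qed
    ultimately show ?thesis
      using Mu.IH(2)[OF i'(1,2)] False t_fixed by (simp add: qcomp_subst psubst_mult mult_ac)
  qed
qed

definition Phi :: "'a::comm_ring_1 \<Rightarrow> (optree \<Rightarrow>\<^sub>0 'a) \<Rightarrow> 'a kpoly" where
  "Phi lam f = (\<Sum>t\<in>Poly_Mapping.keys f. pconst (Poly_Mapping.lookup f t) * phit lam t)"

lemma Phi_superset:
  assumes "finite S" "Poly_Mapping.keys f \<subseteq> S"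
  shows "Phi lam f = (\<Sum>t\<in>S. pconst (Poly_Mapping.lookup f t) * phit lam t)"
  unfolding Phi_def using assms by (intro sum.mono_neutral_left) (auto simp: in_keys_iff)

lemma Phi_zero [simp]: "Phi lam 0 = 0" by (simp add: Phi_def)

lemma Phi_add: "Phi lam (f + g) = Phi lam f + Phi lam g"
  by (subst (1 2 3) Phi_superset[where S = "Poly_Mapping.keys f \<union> Poly_Mapping.keys g"])
     (use keys_add[of f g] in \<open>auto simp: lookup_add pconst_add distrib_right sum.distrib\<close>)

lemma Phi_diff: "Phi lam (f - g) = Phi lam f - Phi lam g"
  using Phi_add[of lam "f - g" g] by (simp add: algebra_simps)

lemma Phi_single: "Phi lam (Poly_Mapping.single t c) = pconst c * phit lam t"
  by (subst Phi_superset[where S = "{t}"]) auto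

lemma Phi_ft: "Phi lam (ft t) = phit lam t"
  by (simp add: ft_def Phi_single)

lemma Phi_fsc: "Phi lam (fsc a f) = pconst a * Phi lam f"
  by (subst (1 2) Phi_superset[where S = "Poly_Mapping.keys f"])
     (use keys_fsc in \<open>auto simp: pconst_mult sum_distrib_left mult_ac\<close>)

lemma Phi_sum: "Phi lam (sum F A) = (\<Sum>a\<in>A. Phi lam (F a))"
  by (induction A rule: infinite_finite_induct) (auto simp: Phi_add)

lemma Phi_Qc: "f \<in> Fc n \<Longrightarrow> Phi lam f \<in> Qc n"
  unfolding Phi_def by (intro Qc_sum Qc_mult Qc_pconst) (auto simp: Fc_def intro: phit_Qc)

lemma Phi_fcomp:
  assumes "f \<in> Fc l" "g \<in> Fc m" "1 \<le> i" "i \<le> l"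
  shows "Phi lam (fcomp i f g) = qcomp lam l m i (Phi lam f) (Phi lam g)"
proof -
  have "Phi lam (fcomp i f g) = (\<Sum>t\<in>Poly_Mapping.keys f. \<Sum>s\<in>Poly_Mapping.keys g.
      pconst (Poly_Mapping.lookup f t) * (pconst (Poly_Mapping.lookup g s) *
        qcomp lam l m i (phit lam t) (phit lam s)))"
    unfolding fcomp_def Phi_sum Phi_single
  proof (intro sum.cong refl)
    fix t s assume "t \<in> Poly_Mapping.keys f" "s \<in> Poly_Mapping.keys g"
    then have "leaves t = l" "leaves s = m" using assms by (auto simp: Fc_def)
    then show "pconst (Poly_Mapping.lookup f t * Poly_Mapping.lookup g s) * phit lam (graft i t s) =
      pconst (Poly_Mapping.lookup f t) * (pconst (Poly_Mapping.lookup g s) *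
        qcomp lam l m i (phit lam t) (phit lam s))"
      using assms by (simp add: phit_graft pconst_mult mult_ac)
  qed
  also have "\<dots> = qcomp lam l m i (Phi lam f) (Phi lam g)"
    unfolding Phi_def qcomp_subst psubst_sum psubst_mult psubst_pconst
    by (simp add: sum_distrib_left sum_distrib_right mult_ac)
  finally show ?thesis .
qed

lemma asder_ideal_kernel: "(n, f) \<in> asder_ideal lam \<Longrightarrow> Phi lam f = 0"
proof (induction rule: asder_ideal.induct)
  case gen_assoc
  then show ?case by (simp add: rel_assoc_def Phi_diff Phi_ft)
next
  case gen_der
  have "phit lam (Dn (Mu Leaf Leaf)) = Xv 1 + Xv 2 + pconst lam * Xv 1 * Xv 2"
    using theta_1_2 by (simp add: numeral_2_eq_2)
  moreover have "phit lam (Mu (Dn Leaf) Leaf) = Xv 1" "phit lam (Mu Leaf (Dn Leaf)) = Xv 2"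
    "phit lam (Mu (Dn Leaf) (Dn Leaf)) = Xv 1 * Xv 2"
    by (simp_all add: theta_1[unfolded One_nat_def] place_def numeral_2_eq_2)
  ultimately show ?case by (simp add: rel_der_def Phi_diff Phi_ft Phi_fsc mult_ac)
next
  case (comp_left l f g m i)
  then show ?case using asder_ideal_Fc[OF comp_left(1)] by (simp add: Phi_fcomp qcomp_subst)
next
  case (comp_right f l m g i)
  then show ?case using asder_ideal_Fc[OF comp_right(2)] by (simp add: Phi_fcomp qcomp_subst)
qed (simp_all add: Phi_add Phi_fsc)

section \<open>Normal forms modulo the ideal\<close>

definition ideal_eq :: "'a::comm_ring_1 \<Rightarrow> nat \<Rightarrow> (optree \<Rightarrow>\<^sub>0 'a) \<Rightarrow> (optree \<Rightarrow>\<^sub>0 'a) \<Rightarrow> bool" where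
  "ideal_eq lam n f g \<longleftrightarrow> (n, f - g) \<in> asder_ideal lam"

lemma ideal_eq_refl: "1 \<le> n \<Longrightarrow> ideal_eq lam n f f"
  by (simp add: ideal_eq_def asder_ideal.zero)

lemma ideal_eq_trans: "ideal_eq lam n f g \<Longrightarrow> ideal_eq lam n g h \<Longrightarrow> ideal_eq lam n f h"
  unfolding ideal_eq_def using asder_ideal.add[of n "f - g" lam "g - h"] by simp

lemma ideal_eq_add: "ideal_eq lam n f f' \<Longrightarrow> ideal_eq lam n g g' \<Longrightarrow> ideal_eq lam n (f + g) (f' + g')"
  unfolding ideal_eq_def using asder_ideal.add[of n "f - f'" lam "g - g'"] by (simp add: algebra_simps)

lemma ideal_eq_fsc: "ideal_eq lam n f f' \<Longrightarrow> ideal_eq lam n (fsc a f) (fsc a f')"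
  unfolding ideal_eq_def using asder_ideal.smul[of n "f - f'" lam a] by (simp add: fsc_diff)

lemma ideal_eq_comp_right:
  "f \<in> Fc l \<Longrightarrow> ideal_eq lam m g g' \<Longrightarrow> 1 \<le> i \<Longrightarrow> i \<le> l \<Longrightarrow>
   ideal_eq lam (l + m - 1) (fcomp i f g) (fcomp i f g')"
  unfolding ideal_eq_def using asder_ideal.comp_right[of f l m "g - g'" lam i]
  by (simp add: fcomp_diff_right)

lemma assoc_ideal_eq:
  "ideal_eq lam (leaves a + leaves b + leaves c) (ft (Mu (Mu a b) c)) (ft (Mu a (Mu b c)))"
proof -
  have "(3 + leaves c - 1, fcomp 3 rel_assoc (ft c)) \<in> asder_ideal lam"
    by (rule asder_ideal.comp_left[OF asder_ideal.gen_assoc]) (simp_all add: Fc_ft leaves_pos[simplified])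
  then have "(3 + leaves c - 1 + leaves b - 1, fcomp 2 (fcomp 3 rel_assoc (ft c)) (ft b)) \<in> asder_ideal lam"
    by (rule asder_ideal.comp_left) (simp_all add: Fc_ft leaves_pos[simplified])
  then have in_ideal: "(3 + leaves c - 1 + leaves b - 1 + leaves a - 1,
      fcomp 1 (fcomp 2 (fcomp 3 rel_assoc (ft c)) (ft b)) (ft a)) \<in> asder_ideal lam"
    by (rule asder_ideal.comp_left) (simp_all add: Fc_ft leaves_pos[simplified])
  have tree: "fcomp 1 (fcomp 2 (fcomp 3 rel_assoc (ft c)) (ft b)) (ft a)
      = ft (Mu (Mu a b) c) - ft (Mu a (Mu b c))"
    by (simp add: rel_assoc_def fcomp_diff_left fcomp_ft)
  have arity: "3 + leaves c - 1 + leaves b - 1 + leaves a - 1 = leaves a + leaves b + leaves c"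
    using leaves_pos[of a] leaves_pos[of b] leaves_pos[of c] by linarith
  show ?thesis using in_ideal unfolding ideal_eq_def tree arity .
qed

lemma leibniz_ideal_eq:
  "ideal_eq lam (leaves a + leaves b) (ft (Dn (Mu a b)))
     (ft (Mu (Dn a) b) + ft (Mu a (Dn b)) + fsc lam (ft (Mu (Dn a) (Dn b))))"
proof -
  have "(2 + leaves b - 1, fcomp 2 (rel_der lam) (ft b)) \<in> asder_ideal lam"
    by (rule asder_ideal.comp_left[OF asder_ideal.gen_der]) (simp_all add: Fc_ft leaves_pos[simplified])
  then have in_ideal: "(2 + leaves b - 1 + leaves a - 1, fcomp 1 (fcomp 2 (rel_der lam) (ft b)) (ft a))
      \<in> asder_ideal lam"
    by (rule asder_ideal.comp_left) (simp_all add: Fc_ft leaves_pos[simplified])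
  have "fcomp 1 (fcomp 2 (rel_der lam) (ft b)) (ft a)
      = ft (Dn (Mu a b)) - ft (Mu (Dn a) b) - ft (Mu a (Dn b)) - fsc lam (ft (Mu (Dn a) (Dn b)))"
    by (simp add: rel_der_def fcomp_diff_left fcomp_fsc_left fcomp_ft)
  then have tree: "fcomp 1 (fcomp 2 (rel_der lam) (ft b)) (ft a)
      = ft (Dn (Mu a b)) - (ft (Mu (Dn a) b) + ft (Mu a (Dn b)) + fsc lam (ft (Mu (Dn a) (Dn b))))"
    by (simp only: diff_diff_eq)
  have arity: "2 + leaves b - 1 + leaves a - 1 = leaves a + leaves b"
    using leaves_pos[of a] leaves_pos[of b] by linarith
  show ?thesis using in_ideal unfolding ideal_eq_def tree arity .
qed

lemma leaves_iter_Dn [simp]: "leaves ((Dn ^^ j) Leaf) = 1"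
  by (induction j) auto

lemma dmono_single: "dmono_tree [j] = (Dn ^^ j) Leaf"
  by (simp add: dmono_tree_def)

lemma dmono_cons: "js \<noteq> [] \<Longrightarrow> dmono_tree (j # js) = Mu ((Dn ^^ j) Leaf) (dmono_tree js)"
  by (cases js) (auto simp: dmono_tree_def)

lemma leaves_dmono: "js \<noteq> [] \<Longrightarrow> leaves (dmono_tree js) = length js"
  by (induction js rule: induct_list012) (auto simp: dmono_single dmono_cons)

definition normal :: "nat \<Rightarrow> (optree \<Rightarrow>\<^sub>0 'a::comm_ring_1) \<Rightarrow> bool" where
  "normal n h \<longleftrightarrow> (\<forall>t\<in>Poly_Mapping.keys h. \<exists>js. length js = n \<and> t = dmono_tree js)"

definition reducible :: "'a::comm_ring_1 \<Rightarrow> nat \<Rightarrow> (optree \<Rightarrow>\<^sub>0 'a) \<Rightarrow> bool" where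
  "reducible lam n f \<longleftrightarrow> (\<exists>h. normal n h \<and> ideal_eq lam n f h)"

lemma reducible_dmono: "length js = n \<Longrightarrow> 1 \<le> n \<Longrightarrow> reducible lam n (ft (dmono_tree js))"
  unfolding reducible_def normal_def
  by (intro exI[of _ "ft (dmono_tree js)"]) (auto simp: ft_def intro: ideal_eq_refl)

lemma reducible_trans: "ideal_eq lam n f g \<Longrightarrow> reducible lam n g \<Longrightarrow> reducible lam n f"
  unfolding reducible_def by (blast intro: ideal_eq_trans)

lemma reducible_add:
  assumes "reducible lam n f" "reducible lam n g"
  shows "reducible lam n (f + g)"
proof -
  obtain h h' where "normal n h" "ideal_eq lam n f h" "normal n h'" "ideal_eq lam n g h'"
    using assms by (auto simp: reducible_def)
  moreover have "normal n h \<Longrightarrow> normal n h' \<Longrightarrow> normal n (h + h')"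
    using keys_add[of h h'] by (auto simp: normal_def)
  ultimately show ?thesis unfolding reducible_def by (blast intro: ideal_eq_add)
qed

lemma reducible_fsc: "reducible lam n f \<Longrightarrow> reducible lam n (fsc a f)"
  unfolding reducible_def normal_def by (auto intro!: ideal_eq_fsc dest!: set_mp[OF keys_fsc])

lemma reducible_lincomb:
  assumes "finite A" "1 \<le> n" "\<And>a. a \<in> A \<Longrightarrow> reducible lam n (H a)"
  shows "reducible lam n (\<Sum>a\<in>A. fsc (c a) (H a))"
  using assms(1,3)
proof (induction A rule: finite_induct)
  case empty
  show ?case
    unfolding reducible_def normal_def using ideal_eq_refl[OF assms(2)] by (intro exI[of _ 0]) simp
qed (simp add: reducible_add reducible_fsc)

lemma reducible_graft:
  assumes "1 \<le> i" "i \<le> leaves T" and t: "reducible lam (leaves t) (ft t)"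
    and normal_grafts: "\<And>js. length js = leaves t \<Longrightarrow>
        reducible lam (leaves T + leaves t - 1) (ft (graft i T (dmono_tree js)))"
  shows "reducible lam (leaves T + leaves t - 1) (ft (graft i T t))"
proof -
  obtain h where h: "normal (leaves t) h" "ideal_eq lam (leaves t) (ft t) h"
    using t by (auto simp: reducible_def)
  have "ideal_eq lam (leaves T + leaves t - 1) (fcomp i (ft T) (ft t)) (fcomp i (ft T) h)"
    using assms(1,2) h(2) by (intro ideal_eq_comp_right) (simp_all add: Fc_ft)
  moreover have "reducible lam (leaves T + leaves t - 1) (fcomp i (ft T) h)"
    unfolding fcomp_ft_expand
  proof (rule reducible_lincomb)
    fix s assume "s \<in> Poly_Mapping.keys h"
    then obtain js where "length js = leaves t" "s = dmono_tree js"
      using h(1) by (auto simp: normal_def)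
    then show "reducible lam (leaves T + leaves t - 1) (ft (graft i T s))"
      using normal_grafts by simp
  qed (use assms(1,2) leaves_pos[of t] in simp_all)
  ultimately show ?thesis by (simp add: fcomp_ft reducible_trans)
qed

lemma mu_dmono_ideal_eq:
  "js1 \<noteq> [] \<Longrightarrow> js2 \<noteq> [] \<Longrightarrow> ideal_eq lam (length js1 + length js2)
     (ft (Mu (dmono_tree js1) (dmono_tree js2))) (ft (dmono_tree (js1 @ js2)))"
proof (induction js1)
  case (Cons j js1)
  show ?case
  proof (cases "js1 = []")
    case True
    then show ?thesis using Cons.prems by (simp add: dmono_single dmono_cons ideal_eq_refl)
  next
    case False
    let ?a = "(Dn ^^ j) Leaf" and ?A = "dmono_tree js1" and ?B = "dmono_tree js2"
    have "ideal_eq lam (1 + length js1 + length js2) (ft (Mu (Mu ?a ?A) ?B)) (ft (Mu ?a (Mu ?A ?B)))"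
      using assoc_ideal_eq[of lam ?a ?A ?B] False Cons.prems by (simp add: leaves_dmono)
    moreover have "ideal_eq lam (2 + (length js1 + length js2) - 1)
        (fcomp 2 (ft (Mu ?a Leaf)) (ft (Mu ?A ?B))) (fcomp 2 (ft (Mu ?a Leaf)) (ft (dmono_tree (js1 @ js2))))"
      using Cons.IH False Cons.prems by (intro ideal_eq_comp_right) (simp_all add: Fc_ft)
    ultimately show ?thesis
      using False Cons.prems by (auto simp: fcomp_ft dmono_cons intro: ideal_eq_trans)
  qed
qed simp

lemma reducible_mu_iter_Dn:
  assumes "reducible lam (leaves t) (ft t)"
  shows "reducible lam (Suc (leaves t)) (ft (Mu ((Dn ^^ j) Leaf) t))"
proof -
  have "reducible lam (leaves (Mu ((Dn ^^ j) Leaf) Leaf) + leaves t - 1)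
      (ft (graft 2 (Mu ((Dn ^^ j) Leaf) Leaf) t))"
  proof (rule reducible_graft[OF _ _ assms])
    fix js :: "nat list" assume "length js = leaves t"
    moreover have "js \<noteq> []" using calculation leaves_pos[of t] by auto
    ultimately show "reducible lam (leaves (Mu ((Dn ^^ j) Leaf) Leaf) + leaves t - 1)
        (ft (graft 2 (Mu ((Dn ^^ j) Leaf) Leaf) (dmono_tree js)))"
      using reducible_dmono[of "j # js" "Suc (leaves t)" lam] by (simp add: dmono_cons)
  qed simp_all
  then show ?thesis by simp
qed

text \<open>The Leibniz rule pushes \<open>D\<close> into a normal tree.\<close>
lemma reducible_Dn_dmono: "js \<noteq> [] \<Longrightarrow> reducible lam (length js) (ft (Dn (dmono_tree js)))"
proof (induction js)
  case (Cons j js)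
  show ?case
  proof (cases "js = []")
    case True
    then show ?thesis using reducible_dmono[of "[Suc j]" 1 lam] by (simp add: dmono_single)
  next
    case False
    let ?a = "(Dn ^^ j) Leaf" and ?B = "dmono_tree js"
    have lB: "leaves ?B = length js" using False by (simp add: leaves_dmono)
    have "reducible lam (Suc (length js))
        (ft (Mu (Dn ?a) ?B) + ft (Mu ?a (Dn ?B)) + fsc lam (ft (Mu (Dn ?a) (Dn ?B))))"
    proof (intro reducible_add reducible_fsc)
      show "reducible lam (Suc (length js)) (ft (Mu (Dn ?a) ?B))"
        using reducible_dmono[of "Suc j # js" "Suc (length js)" lam] False by (simp add: dmono_cons)
      show "reducible lam (Suc (length js)) (ft (Mu ?a (Dn ?B)))"
        using reducible_mu_iter_Dn[of lam "Dn ?B" j] Cons.IH False lB by simp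
      show "reducible lam (Suc (length js)) (ft (Mu (Dn ?a) (Dn ?B)))"
        using reducible_mu_iter_Dn[of lam "Dn ?B" "Suc j"] Cons.IH False lB by simp
    qed
    then show ?thesis
      using leibniz_ideal_eq[of lam ?a ?B] lB False by (auto simp: dmono_cons intro: reducible_trans)
  qed
qed simp

text \<open>Reducibility is preserved by \<open>D\<close>: graft \<open>D\<close> on top and use the Leibniz rule on normal trees.\<close>
lemma reducible_Dn:
  assumes "reducible lam (leaves t) (ft t)"
  shows "reducible lam (leaves t) (ft (Dn t))"
proof -
  have "reducible lam (leaves (Dn Leaf) + leaves t - 1) (ft (graft 1 (Dn Leaf) t))"
  proof (rule reducible_graft[OF _ _ assms])
    fix js :: "nat list" assume "length js = leaves t"
    moreover have "js \<noteq> []" using calculation leaves_pos[of t] by auto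
    ultimately show "reducible lam (leaves (Dn Leaf) + leaves t - 1) (ft (graft 1 (Dn Leaf) (dmono_tree js)))"
      using reducible_Dn_dmono[of js lam] by simp
  qed simp_all
  then show ?thesis by simp
qed

lemma reducible_Mu_dmono:
  assumes t: "reducible lam (leaves t) (ft t)" and js2: "js2 \<noteq> []"
  shows "reducible lam (leaves t + length js2) (ft (Mu t (dmono_tree js2)))"
proof -
  have "reducible lam (leaves (Mu Leaf (dmono_tree js2)) + leaves t - 1)
      (ft (graft 1 (Mu Leaf (dmono_tree js2)) t))"
  proof (rule reducible_graft[OF _ _ t])
    fix js1 :: "nat list" assume js1: "length js1 = leaves t"
    then have "js1 \<noteq> []" using leaves_pos[of t] by auto
    then show "reducible lam (leaves (Mu Leaf (dmono_tree js2)) + leaves t - 1)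
        (ft (graft 1 (Mu Leaf (dmono_tree js2)) (dmono_tree js1)))"
      using mu_dmono_ideal_eq[of js1 js2 lam] reducible_dmono[of "js1 @ js2" "leaves t + length js2" lam]
        js1 js2 leaves_pos[of t] by (simp add: leaves_dmono add.commute reducible_trans)
  qed simp_all
  then show ?thesis using js2 by (simp add: leaves_dmono add.commute)
qed

lemma reducible_Mu:
  assumes "reducible lam (leaves t) (ft t)" "reducible lam (leaves u) (ft u)"
  shows "reducible lam (leaves t + leaves u) (ft (Mu t u))"
proof -
  have "reducible lam (leaves (Mu t Leaf) + leaves u - 1) (ft (graft (leaves t + 1) (Mu t Leaf) u))"
  proof (rule reducible_graft[OF _ _ assms(2)])
    fix js2 :: "nat list" assume len: "length js2 = leaves u"
    moreover have "js2 \<noteq> []" using len leaves_pos[of u] by auto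
    ultimately show "reducible lam (leaves (Mu t Leaf) + leaves u - 1)
        (ft (graft (leaves t + 1) (Mu t Leaf) (dmono_tree js2)))"
      using reducible_Mu_dmono[OF assms(1), of js2] by simp
  qed simp_all
  then show ?thesis by simp
qed

lemma reducible_tree: "reducible lam (leaves t) (ft t)"
proof (induction t)
  case Leaf
  show ?case using reducible_dmono[of "[0]" 1 lam] by (simp add: dmono_single)
qed (simp_all add: reducible_Dn reducible_Mu)

section \<open>Normal trees map to distinct monomials\<close>

definition monl :: "nat list \<Rightarrow> (nat \<Rightarrow>\<^sub>0 nat)" where
  "monl js = (\<Sum>k<length js. Poly_Mapping.single (Suc k) (js ! k))"

lemma lookup_monl:
  "Poly_Mapping.lookup (monl js) v = (if 1 \<le> v \<and> v \<le> length js then js ! (v - 1) else 0)"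
proof -
  have "Poly_Mapping.lookup (monl js) v = (\<Sum>k<length js. if k = v - 1 \<and> 1 \<le> v then js ! k else 0)"
    unfolding monl_def lookup_sum by (intro sum.cong refl) (auto simp: lookup_single when_def)
  also have "\<dots> = (if 1 \<le> v \<and> v \<le> length js then js ! (v - 1) else 0)"
    by (cases "1 \<le> v") (auto simp: sum.delta')
  finally show ?thesis .
qed

lemma monl_inj: "length js = length js' \<Longrightarrow> monl js = monl js' \<Longrightarrow> js = js'"
proof (rule nth_equalityI)
  assume eq: "length js = length js'" "monl js = monl js'"
  then show "length js = length js'" by simp
  fix k assume "k < length js"
  then show "js ! k = js' ! k"
    using arg_cong[OF eq(2), of "\<lambda>m. Poly_Mapping.lookup m (Suc k)"] eq(1) by (simp add: lookup_monl)
qed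

lemma monl_surj:
  assumes "Poly_Mapping.keys mon \<subseteq> {1..n}"
  shows "monl (map (\<lambda>k. Poly_Mapping.lookup mon (Suc k)) [0..<n]) = mon"
proof (rule poly_mapping_eqI)
  fix v
  show "Poly_Mapping.lookup (monl (map (\<lambda>k. Poly_Mapping.lookup mon (Suc k)) [0..<n])) v
      = Poly_Mapping.lookup mon v"
  proof (cases "1 \<le> v \<and> v \<le> n")
    case True
    then have "v - 1 < n" "Suc (v - 1) = v" by auto
    then show ?thesis using True by (simp add: lookup_monl)
  next
    case False
    then have "v \<notin> Poly_Mapping.keys mon" using assms by auto
    moreover have "Poly_Mapping.lookup (monl (map (\<lambda>k. Poly_Mapping.lookup mon (Suc k)) [0..<n])) v = 0"
      using False by (simp only: lookup_monl length_map length_upt diff_zero if_False)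
    ultimately show ?thesis by (simp add: in_keys_iff)
  qed
qed

lemma phit_iter_Dn: "phit lam ((Dn ^^ j) Leaf) = Xv 1 ^ j"
  by (induction j) (simp_all add: theta_1[unfolded One_nat_def])

lemma phit_dmono: "js \<noteq> [] \<Longrightarrow> phit lam (dmono_tree js) = (\<Prod>k<length js. Xv (k + 1) ^ (js ! k))"
proof (induction js rule: induct_list012)
  case (3 j j' js)
  have "phit lam (dmono_tree (j # j' # js))
      = Xv 1 ^ j * psubst (\<lambda>v. Xv (v + 1)) (\<Prod>k<length (j' # js). Xv (k + 1) ^ ((j' # js) ! k))"
    using 3 by (simp add: dmono_cons phit_iter_Dn place_def[abs_def])
  also have "\<dots> = Xv 1 ^ j * (\<Prod>k<length (j' # js). Xv (Suc k + 1) ^ ((j' # js) ! k))"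
    by (simp only: psubst_prod psubst_power psubst_Xv) simp
  also have "\<dots> = (\<Prod>k<length (j # j' # js). Xv (k + 1) ^ ((j # j' # js) ! k))"
    unfolding length_Cons prod.lessThan_Suc_shift by simp
  finally show ?case .
qed (simp_all add: dmono_single phit_iter_Dn)

lemma phit_dmono_monl: "js \<noteq> [] \<Longrightarrow> phit lam (dmono_tree js) = Poly_Mapping.single (monl js) 1"
  by (simp add: phit_dmono Xv_power prod_singles monl_def)

text \<open>The exponents can be read back from a normal tree, so \<open>dmono_tree\<close> is injective.\<close>
fun dcount :: "optree \<Rightarrow> nat" where
  "dcount (Dn t) = Suc (dcount t)"
| "dcount _ = 0"

fun dexps :: "optree \<Rightarrow> nat list" where
  "dexps (Mu t u) = dcount t # dexps u"
| "dexps t = [dcount t]"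

lemma dcount_iter_Dn: "dcount ((Dn ^^ j) Leaf) = j"
  by (induction j) auto

lemma dexps_iter_Dn: "dexps ((Dn ^^ j) Leaf) = [j]"
  using dcount_iter_Dn[of j] by (cases j) auto

lemma dexps_dmono: "js \<noteq> [] \<Longrightarrow> dexps (dmono_tree js) = js"
  by (induction js rule: induct_list012) (simp_all add: dmono_single dmono_cons dexps_iter_Dn dcount_iter_Dn)

lemma lookup_Phi_normal:
  assumes "normal n h" "length js = n" "js \<noteq> []"
  shows "Poly_Mapping.lookup (Phi lam h) (monl js) = Poly_Mapping.lookup h (dmono_tree js)"
proof -
  have "Poly_Mapping.lookup (Phi lam h) (monl js) = (\<Sum>t\<in>Poly_Mapping.keys h.
      if t = dmono_tree js then Poly_Mapping.lookup h t else 0)"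
    unfolding Phi_def lookup_sum
  proof (intro sum.cong refl)
    fix t assume "t \<in> Poly_Mapping.keys h"
    then obtain js' where js': "length js' = n" "t = dmono_tree js'"
      using assms(1) by (auto simp: normal_def)
    then have "js' \<noteq> []" using assms(2,3) by auto
    then have "phit lam t = Poly_Mapping.single (monl js') 1" using js' by (simp add: phit_dmono_monl)
    moreover have "monl js' = monl js \<longleftrightarrow> t = dmono_tree js"
      using js' assms monl_inj[of js' js] dexps_dmono[of js] dexps_dmono[of js'] \<open>js' \<noteq> []\<close>
      by auto
    ultimately show "Poly_Mapping.lookup (pconst (Poly_Mapping.lookup h t) * phit lam t) (monl js)
        = (if t = dmono_tree js then Poly_Mapping.lookup h t else 0)"
      by (simp add: pconst_def mult_single lookup_single when_def)
  qed
  also have "\<dots> = Poly_Mapping.lookup h (dmono_tree js)"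
    by (simp add: sum.delta' in_keys_iff)
  finally show ?thesis .
qed

lemma normal_Phi_eq_0:
  assumes "normal n h" "1 \<le> n" "Phi lam h = 0"
  shows "h = 0"
proof (rule poly_mapping_eqI)
  fix t
  show "Poly_Mapping.lookup h t = Poly_Mapping.lookup 0 t"
  proof (cases "t \<in> Poly_Mapping.keys h")
    case True
    then obtain js where "length js = n" "t = dmono_tree js" using assms(1) by (auto simp: normal_def)
    moreover then have "js \<noteq> []" using assms(2) by auto
    ultimately show ?thesis using lookup_Phi_normal[OF assms(1), of js lam] assms(3) by simp
  qed (simp add: in_keys_iff)
qed

text \<open>The kernel of \<open>\<Phi>\<close> is the ideal: reduce to a normal element, which must vanish.\<close>
lemma kernel_in_asder_ideal:
  assumes "1 \<le> n" "f \<in> Fc n" "Phi lam f = 0"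
  shows "(n, f) \<in> asder_ideal lam"
proof -
  have "reducible lam n (\<Sum>t\<in>Poly_Mapping.keys f. fsc (Poly_Mapping.lookup f t) (ft t))"
  proof (rule reducible_lincomb[OF finite_keys assms(1)])
    fix t assume "t \<in> Poly_Mapping.keys f"
    then have "leaves t = n" using assms(2) by (auto simp: Fc_def)
    then show "reducible lam n (ft t)" using reducible_tree[of lam t] by simp
  qed
  then obtain h where h: "normal n h" "ideal_eq lam n f h"
    using expand_trees[of f] by (auto simp: reducible_def)
  have "Phi lam h = 0"
    using asder_ideal_kernel[of n "f - h" lam] h(2) assms(3) by (simp add: ideal_eq_def Phi_diff)
  then have "h = 0" using normal_Phi_eq_0[OF h(1) assms(1)] by simp
  then show ?thesis using h(2) by (simp add: ideal_eq_def)
qed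

text \<open>Surjectivity: a polynomial is the image of the same combination of normal trees.\<close>
lemma Phi_surj:
  assumes "1 \<le> n" "p \<in> Qc n"
  shows "p \<in> Phi lam ` Fc n"
proof -
  define J where "J mon = map (\<lambda>k. Poly_Mapping.lookup mon (Suc k)) [0..<n]" for mon :: "nat \<Rightarrow>\<^sub>0 nat"
  define f where "f = (\<Sum>mon\<in>Poly_Mapping.keys p.
      Poly_Mapping.single (dmono_tree (J mon)) (Poly_Mapping.lookup p mon))"
  have J: "J mon \<noteq> []" "length (J mon) = n" for mon using assms(1) by (auto simp: J_def)
  have "f \<in> Fc n" unfolding f_def by (intro Fc_sum Fc_single) (simp add: leaves_dmono J)
  moreover have "Phi lam f = p"
  proof -
    have "Phi lam f = (\<Sum>mon\<in>Poly_Mapping.keys p.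
        pconst (Poly_Mapping.lookup p mon) * phit lam (dmono_tree (J mon)))"
      unfolding f_def Phi_sum Phi_single ..
    also have "\<dots> = (\<Sum>mon\<in>Poly_Mapping.keys p. Poly_Mapping.single mon (Poly_Mapping.lookup p mon))"
    proof (intro sum.cong refl)
      fix mon assume "mon \<in> Poly_Mapping.keys p"
      then have "monl (J mon) = mon"
        unfolding J_def using assms(2) by (intro monl_surj) (auto simp: Qc_def)
      then show "pconst (Poly_Mapping.lookup p mon) * phit lam (dmono_tree (J mon))
          = Poly_Mapping.single mon (Poly_Mapping.lookup p mon)"
        using J by (simp add: phit_dmono_monl pconst_def mult_single)
    qed
    also have "\<dots> = p" by (rule sum_single_keys)
    finally show ?thesis .
  qed
  ultimately show ?thesis by blast
qed

theorem theorem4p2: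
  fixes lam :: "'a::comm_ring_1"
  shows "ns_operad (Qc :: nat \<Rightarrow> 'a kpoly set) qsc 1 (qcomp lam)
    \<and> (\<exists>\<phi> :: (optree \<Rightarrow>\<^sub>0 'a) \<Rightarrow> 'a kpoly.
         (\<forall>n\<ge>1. \<forall>f\<in>Fc n. \<forall>g\<in>Fc n. \<phi> (f + g) = \<phi> f + \<phi> g)
       \<and> (\<forall>n\<ge>1. \<forall>a. \<forall>f\<in>Fc n. \<phi> (fsc a f) = qsc a (\<phi> f))
       \<and> (\<forall>n\<ge>1. \<phi> ` Fc n = Qc n)
       \<and> (\<forall>n\<ge>1. \<forall>f\<in>Fc n. \<phi> f = 0 \<longleftrightarrow> (n, f) \<in> asder_ideal lam)
       \<and> (\<forall>l m i f g. 1 \<le> m \<longrightarrow> 1 \<le> i \<longrightarrow> i \<le> l \<longrightarrow> f \<in> Fc l \<longrightarrow> g \<in> Fc m \<longrightarrow>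
            \<phi> (fcomp i f g) = qcomp lam l m i (\<phi> f) (\<phi> g))
       \<and> \<phi> (ft Leaf) = 1
       \<and> \<phi> (ft (Dn Leaf)) = Xv 1
       \<and> \<phi> (ft (Mu Leaf Leaf)) = 1
       \<and> (\<forall>js. js \<noteq> [] \<longrightarrow>
            \<phi> (ft (dmono_tree js)) = (\<Prod>k<length js. Xv (k + 1) ^ (js ! k))))"
proof (intro conjI exI[of _ "Phi lam"] allI impI ballI)
  show "ns_operad (Qc :: nat \<Rightarrow> 'a kpoly set) qsc 1 (qcomp lam)" by (rule Q_operad)
  show "Phi lam (f + g) = Phi lam f + Phi lam g" for f g by (rule Phi_add)
  show "Phi lam (fsc a f) = qsc a (Phi lam f)" for a f by (simp add: Phi_fsc qsc_def)
  show "Phi lam ` Fc n = Qc n" if "1 \<le> n" for n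
    using Phi_Qc[of _ n lam] Phi_surj[OF that, of _ lam] by blast
  show "Phi lam f = 0 \<longleftrightarrow> (n, f) \<in> asder_ideal lam" if "1 \<le> n" "f \<in> Fc n" for n f
    using asder_ideal_kernel[of n f lam] kernel_in_asder_ideal[OF that, of lam] by blast
  show "Phi lam (fcomp i f g) = qcomp lam l m i (Phi lam f) (Phi lam g)"
    if "1 \<le> i" "i \<le> l" "f \<in> Fc l" "g \<in> Fc m" for l m i f g
    by (rule Phi_fcomp[OF that(3,4,1,2)])
  show "Phi lam (ft Leaf) = 1" "Phi lam (ft (Mu Leaf Leaf)) = 1" "Phi lam (ft (Dn Leaf)) = Xv 1"
    by (simp_all add: Phi_ft theta_1[unfolded One_nat_def])
  show "Phi lam (ft (dmono_tree js)) = (\<Prod>k<length js. Xv (k + 1) ^ (js ! k))" if "js \<noteq> []" for js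
    using that by (simp add: Phi_ft phit_dmono)
qed

end
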